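(* There exist constants $k_3,k_4$ such that for every compact $S\subseteq\mathbb{B}^{d_1d_2}=\{X:\|X\|_F\le1\}$ with non-empty interior, $$\mathbb{E}_\Omega\sup_{X,Y\in S}\|P_\Omega(X-Y)\|_2^2\le k_3\frac{|\Omega|}{d_1d_2}w_G^2(S)+k_4\Big(\sup_{X,Y\in S}\|X-Y\|_\infty\Big)w_{\Omega,g}(S).$$
   Context: $\Omega=(E_1,\dots,E_{|\Omega|})$ independent, each $E_k=e_{i_k}e_{j_k}^\top$ uniform over the standard basis matrices of $\mathbb{R}^{d_1\times d_2}$; $P_\Omega(X)=\sum_k\langle X,E_k\rangle e_k$, $P_\Omega^*$ its adjoint. $g\sim N(0,I_{|\Omega|})$ independent of $\Omega$, and $w_{\Omega,g}(S)=\mathbb{E}_{\Omega,g}\sup_{X\in S-S}\langle X,P_\Omega^*(g)\rangle$. $w_G(S)=\mathbb{E}\sup_{X\in S}\langle X,G\rangle$ with $G$ an i.i.d. standard Gaussian $d_1\times d_2$ matrix. $\|X\|_\infty=\max_{ij}|X_{ij}|$. *)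

theory Defs
  imports "HOL-Probability.Probability"
begin

text \<open>A d1 x d2 real matrix is represented as a function (nat \<times> nat) \<Rightarrow> real that
vanishes outside the index box {..<d1} \<times> {..<d2}. The space of such functions,
with the subspace topology of the product topology, is R^(d1 d2).\<close>

definition idx :: "nat \<Rightarrow> nat \<Rightarrow> (nat \<times> nat) set" where
  "idx d1 d2 = {..<d1} \<times> {..<d2}"

definition mat_space :: "nat \<Rightarrow> nat \<Rightarrow> (nat \<times> nat \<Rightarrow> real) set" where
  "mat_space d1 d2 = {X. \<forall>p. p \<notin> idx d1 d2 \<longrightarrow> X p = 0}"

definition frob_ball :: "nat \<Rightarrow> nat \<Rightarrow> (nat \<times> nat \<Rightarrow> real) set" where
  "frob_ball d1 d2 = {X \<in> mat_space d1 d2. (\<Sum>p\<in>idx d1 d2. (X p)\<^sup>2) \<le> 1}"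

definition has_nonempty_interior :: "nat \<Rightarrow> nat \<Rightarrow> (nat \<times> nat \<Rightarrow> real) set \<Rightarrow> bool" where
  "has_nonempty_interior d1 d2 S \<longleftrightarrow>
     (\<exists>U. openin (top_of_set (mat_space d1 d2)) U \<and> U \<noteq> {} \<and> U \<subseteq> S)"

text \<open>Omega = (E_1,...,E_m): m independent uniform indices; E_k = e_{i_k} e_{j_k}^T is
represented by the index pair omega k.\<close>
definition Omega_pmf :: "nat \<Rightarrow> nat \<Rightarrow> nat \<Rightarrow> (nat \<Rightarrow> nat \<times> nat) pmf" where
  "Omega_pmf d1 d2 m = pmf_of_set (PiE {..<m} (\<lambda>_. idx d1 d2))"

definition wG :: "nat \<Rightarrow> nat \<Rightarrow> (nat \<times> nat \<Rightarrow> real) set \<Rightarrow> real" where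
  "wG d1 d2 S = integral\<^sup>L (PiM (idx d1 d2) (\<lambda>_. std_normal_distribution))
      (\<lambda>G. SUP X\<in>S. \<Sum>p\<in>idx d1 d2. X p * G p)"

text \<open>w_{Omega,g}(S) = E_{Omega,g} sup_{X\<in>S-S} <X, P_Omega^*(g)>, where
<X, P_Omega^*(g)> = <P_Omega X, g> = sum_k g_k X(omega k).\<close>
definition wOg :: "nat \<Rightarrow> nat \<Rightarrow> nat \<Rightarrow> (nat \<times> nat \<Rightarrow> real) set \<Rightarrow> real" where
  "wOg d1 d2 m S = measure_pmf.expectation (Omega_pmf d1 d2 m)
      (\<lambda>\<omega>. integral\<^sup>L (PiM {..<m} (\<lambda>_. std_normal_distribution))
         (\<lambda>g. SUP (X, Y)\<in>S \<times> S. \<Sum>k<m. g k * (X (\<omega> k) - Y (\<omega> k))))"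

definition diam_inf :: "nat \<Rightarrow> nat \<Rightarrow> (nat \<times> nat \<Rightarrow> real) set \<Rightarrow> real" where
  "diam_inf d1 d2 S = (SUP (X, Y)\<in>S \<times> S. Max ((\<lambda>p. \<bar>X p - Y p\<bar>) ` idx d1 d2))"

end

theory Submission
  imports Defs
begin

text \<open>Write \<open>T = S \<times> S\<close> and \<open>a (X, Y) = X - Y\<close>. The left-hand side is the expected supremum
  over \<open>t \<in> T\<close> of the empirical sum \<open>\<Sum>k<m. (a t (\<omega> k))\<^sup>2\<close>. Symmetrization bounds it by \<open>m\<close> times
  the largest mean of \<open>(a t)\<^sup>2\<close> over all entries, plus twice a Rademacher process in the
  \<open>(a t (\<omega> k))\<^sup>2\<close>. That mean is \<open>\<parallel>X - Y\<parallel>\<^sub>F\<^sup>2 / (d1 * d2)\<close>, and \<open>\<parallel>X - Y\<parallel>\<^sub>F\<close> is at most a constant times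
  the Gaussian width because \<open>E \<bar>\<langle>X - Y, G\<rangle>\<bar>\<close> is of order \<open>\<parallel>X - Y\<parallel>\<^sub>F\<close> (Khintchine's inequality,
  transferred to Gaussians by averaging over sign flips). In the Rademacher process the contraction
  principle replaces \<open>x\<^sup>2\<close> by \<open>2 * D * x\<close>, where \<open>D\<close> is the entrywise diameter of \<open>S\<close>, and a Rademacher
  process is dominated by the Gaussian process with the same coefficients up to the factor
  \<open>1 / E \<bar>g\<bar> = sqrt (pi / 2)\<close>.\<close>

lemma sum_PiE_insert:
  assumes "j \<notin> K"
  shows "(\<Sum>e\<in>PiE (insert j K) T. h e) = (\<Sum>y\<in>T j. \<Sum>g\<in>PiE K T. h (g(j:=y)))"
proof -
  have "(\<Sum>e\<in>PiE (insert j K) T. h e) = (\<Sum>e\<in>(\<lambda>(y, g). g(j := y)) ` (T j \<times> Pi\<^sub>E K T). h e)"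
    by (simp add: PiE_insert_eq)
  also have "\<dots> = (\<Sum>(y,g)\<in>T j \<times> Pi\<^sub>E K T. h (g(j:=y)))"
    by (subst sum.reindex[OF inj_combinator[OF assms]]) (simp add: case_prod_beta)
  also have "\<dots> = (\<Sum>y\<in>T j. \<Sum>g\<in>PiE K T. h (g(j:=y)))"
    by (simp add: sum.cartesian_product)
  finally show ?thesis .
qed

lemma sum_PiE_component:
  fixes h :: "'p \<Rightarrow> real"
  assumes K: "finite K" and k: "k \<in> K"
  shows "real (card I) * (\<Sum>w\<in>PiE K (\<lambda>_. I). h (w k)) = real (card (PiE K (\<lambda>_. I))) * (\<Sum>p\<in>I. h p)"
proof -
  have Kk: "K = insert k (K - {k})" using k by auto
  have "(\<Sum>w\<in>PiE K (\<lambda>_. I). h (w k)) = (\<Sum>y\<in>I. \<Sum>g\<in>PiE (K-{k}) (\<lambda>_. I). h ((g(k:=y)) k))"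
    by (subst Kk, subst sum_PiE_insert) auto
  also have "\<dots> = real (card (PiE (K-{k}) (\<lambda>_. I))) * (\<Sum>p\<in>I. h p)"
    by (simp add: sum_distrib_left)
  finally have sum_eq: "(\<Sum>w\<in>PiE K (\<lambda>_. I). h (w k)) = real (card (PiE (K-{k}) (\<lambda>_. I))) * (\<Sum>p\<in>I. h p)" .
  have "card (PiE K (\<lambda>_. I)) = card I * card (PiE (K-{k}) (\<lambda>_. I))"
  proof -
    obtain n where n: "card K = Suc n" using K k by (metis card_gt_0_iff empty_iff gr0_implies_Suc)
    show ?thesis using K k by (simp add: card_PiE n)
  qed
  then show ?thesis unfolding sum_eq by simp
qed

lemma sum_involution:
  assumes "\<forall>x\<in>A. s x \<in> A \<and> s (s x) = x"
  shows "(\<Sum>x\<in>A. g (s x)) = (\<Sum>x\<in>A. g x)"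
  by (rule sum.reindex_bij_witness[of _ s s]) (use assms in auto)

lemma abs_sum_le_card_mult:
  fixes f :: "'a \<Rightarrow> real"
  assumes "\<forall>k\<in>K. \<bar>f k\<bar> \<le> B"
  shows "\<bar>\<Sum>k\<in>K. f k\<bar> \<le> real (card K) * B"
proof -
  have "\<bar>\<Sum>k\<in>K. f k\<bar> \<le> (\<Sum>k\<in>K. \<bar>f k\<bar>)" by (rule sum_abs)
  also have "\<dots> \<le> (\<Sum>k\<in>K. B)" by (rule sum_mono) (use assms in auto)
  finally show ?thesis by simp
qed

lemma bdd_above_image_abs_le: "\<forall>t\<in>T. \<bar>f t\<bar> \<le> (B::real) \<Longrightarrow> bdd_above (f ` T)"
  by (rule bdd_aboveI[of _ B]) auto

lemma cSUP_add_le: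
  fixes f g :: "'t \<Rightarrow> real"
  assumes "T \<noteq> {}" "bdd_above (f ` T)" "bdd_above (g ` T)"
  shows "(SUP t\<in>T. f t + g t) \<le> (SUP t\<in>T. f t) + (SUP t\<in>T. g t)"
  by (rule cSUP_least[OF assms(1)]) (intro add_mono cSUP_upper assms; simp_all)

lemma cSUP_cmult:
  fixes h :: "'t \<Rightarrow> real"
  assumes c: "c \<ge> 0" and T: "T \<noteq> {}" and b: "bdd_above (h ` T)"
  shows "(SUP t\<in>T. c * h t) = c * (SUP t\<in>T. h t)"
proof (cases "c = 0")
  case True
  then show ?thesis using T by simp
next
  case False
  then have c0: "c > 0" using c by simp
  have bc: "bdd_above ((\<lambda>t. c * h t) ` T)"
    using b c by (auto simp: bdd_above_def intro: mult_left_mono)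
  show ?thesis
  proof (rule antisym)
    show "(SUP t\<in>T. c * h t) \<le> c * (SUP t\<in>T. h t)"
      by (rule cSUP_least[OF T]) (intro mult_left_mono cSUP_upper b c; simp)
    have "(SUP t\<in>T. h t) \<le> (SUP t\<in>T. c * h t) / c"
    proof (rule cSUP_least[OF T])
      fix t assume "t \<in> T"
      then have "c * h t \<le> (SUP t\<in>T. c * h t)" by (rule cSUP_upper[OF _ bc])
      then show "h t \<le> (SUP t\<in>T. c * h t) / c" using c0 by (simp add: field_simps)
    qed
    then show "c * (SUP t\<in>T. h t) \<le> (SUP t\<in>T. c * h t)" using c0 by (simp add: field_simps)
  qed
qed

lemma abs_diff_squares_le:
  fixes x y D :: real
  assumes "\<bar>x\<bar> \<le> D" "\<bar>y\<bar> \<le> D"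
  shows "\<bar>x\<^sup>2 - y\<^sup>2\<bar> \<le> 2 * D * \<bar>x - y\<bar>"
proof -
  have "\<bar>x\<^sup>2 - y\<^sup>2\<bar> = \<bar>x + y\<bar> * \<bar>x - y\<bar>" by (simp add: power2_eq_square abs_mult[symmetric] algebra_simps)
  also have "\<dots> \<le> (2 * D) * \<bar>x - y\<bar>" using assms by (intro mult_right_mono) auto
  finally show ?thesis by simp
qed

lemma abs_add_mult_le:
  fixes c y x :: real
  assumes "\<bar>c\<bar> \<le> C" "\<bar>y\<bar> \<le> Y" "\<bar>x\<bar> \<le> B"
  shows "\<bar>c + y * x\<bar> \<le> C + Y * B"
proof -
  have "\<bar>y\<bar> * \<bar>x\<bar> \<le> Y * B" by (rule mult_mono) (use assms in auto)
  then show ?thesis using assms(1) abs_triangle_ineq[of c "y * x"] by (simp add: abs_mult)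
qed

section \<open>Suprema of linear forms\<close>

definition sup_inner :: "'t set \<Rightarrow> ('t \<Rightarrow> 'i \<Rightarrow> real) \<Rightarrow> 'i set \<Rightarrow> ('i \<Rightarrow> real) \<Rightarrow> real" where
  "sup_inner T a K x = (SUP t\<in>T. \<Sum>k\<in>K. x k * a t k)"

lemma abs_sum_mult_le:
  fixes a x :: "'i \<Rightarrow> real"
  assumes "\<forall>k\<in>K. \<bar>a k\<bar> \<le> B"
  shows "\<bar>\<Sum>k\<in>K. x k * a k\<bar> \<le> B * (\<Sum>k\<in>K. \<bar>x k\<bar>)"
proof -
  have "\<bar>\<Sum>k\<in>K. x k * a k\<bar> \<le> (\<Sum>k\<in>K. \<bar>x k\<bar> * \<bar>a k\<bar>)"
    using sum_abs[of "\<lambda>k. x k * a k" K] by (simp add: abs_mult)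
  also have "\<dots> \<le> (\<Sum>k\<in>K. \<bar>x k\<bar> * B)" using assms by (intro sum_mono mult_left_mono) auto
  finally show ?thesis by (simp add: sum_distrib_left mult.commute)
qed

lemma bdd_above_sup_inner:
  fixes a :: "'t \<Rightarrow> 'i \<Rightarrow> real"
  assumes "\<forall>t\<in>T. \<forall>k\<in>K. \<bar>a t k\<bar> \<le> B"
  shows "bdd_above ((\<lambda>t. \<Sum>k\<in>K. x k * a t k) ` T)"
  by (rule bdd_above_image_abs_le[where B="B * (\<Sum>k\<in>K. \<bar>x k\<bar>)"]) (use assms in \<open>auto intro!: abs_sum_mult_le\<close>)

lemma sup_inner_upper:
  fixes a :: "'t \<Rightarrow> 'i \<Rightarrow> real"
  shows "t \<in> T \<Longrightarrow> \<forall>t\<in>T. \<forall>k\<in>K. \<bar>a t k\<bar> \<le> B \<Longrightarrow> (\<Sum>k\<in>K. x k * a t k) \<le> sup_inner T a K x"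
  unfolding sup_inner_def by (rule cSUP_upper[OF _ bdd_above_sup_inner])

lemma sup_inner_cong: "(\<And>k. k \<in> K \<Longrightarrow> x k = y k) \<Longrightarrow> sup_inner T a K x = sup_inner T a K y"
  unfolding sup_inner_def by (intro SUP_cong refl sum.cong) auto

lemma sup_inner_le_add:
  assumes T: "T \<noteq> {}" and ab: "\<forall>t\<in>T. \<forall>k\<in>K. \<bar>a t k\<bar> \<le> B"
  shows "sup_inner T a K x \<le> sup_inner T a K y + B * (\<Sum>k\<in>K. \<bar>x k - y k\<bar>)"
  unfolding sup_inner_def[of T a K x]
proof (rule cSUP_least[OF T])
  fix t assume t: "t \<in> T"
  have "(\<Sum>k\<in>K. x k * a t k) = (\<Sum>k\<in>K. y k * a t k) + (\<Sum>k\<in>K. (x k - y k) * a t k)"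
    by (simp add: sum.distrib[symmetric] algebra_simps)
  also have "\<dots> \<le> sup_inner T a K y + B * (\<Sum>k\<in>K. \<bar>x k - y k\<bar>)"
  proof (rule add_mono)
    show "(\<Sum>k\<in>K. y k * a t k) \<le> sup_inner T a K y" by (rule sup_inner_upper[OF t ab])
    have "\<forall>k\<in>K. \<bar>a t k\<bar> \<le> B" using ab t by blast
    from abs_sum_mult_le[OF this, of "\<lambda>k. x k - y k"]
    show "(\<Sum>k\<in>K. (x k - y k) * a t k) \<le> B * (\<Sum>k\<in>K. \<bar>x k - y k\<bar>)" by linarith
  qed
  finally show "(\<Sum>k\<in>K. x k * a t k) \<le> sup_inner T a K y + B * (\<Sum>k\<in>K. \<bar>x k - y k\<bar>)" .
qed

lemma abs_sup_inner_le:
  assumes T: "T \<noteq> {}" and ab: "\<forall>t\<in>T. \<forall>k\<in>K. \<bar>a t k\<bar> \<le> B"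
  shows "\<bar>sup_inner T a K x\<bar> \<le> B * (\<Sum>k\<in>K. \<bar>x k\<bar>)"
proof -
  have "sup_inner T a K (\<lambda>_. 0) = 0" using T by (simp add: sup_inner_def)
  then show ?thesis
    using sup_inner_le_add[OF T ab, of x "\<lambda>_. 0"] sup_inner_le_add[OF T ab, of "\<lambda>_. 0" x] by simp
qed

lemma continuous_on_sup_inner:
  fixes a :: "'t \<Rightarrow> 'i::countable \<Rightarrow> real"
  assumes T: "T \<noteq> {}" and ab: "\<forall>t\<in>T. \<forall>k\<in>K. \<bar>a t k\<bar> \<le> B"
  shows "continuous_on UNIV (sup_inner T a K)"
proof (rule continuous_on_sequentiallyI)
  fix u :: "nat \<Rightarrow> 'i \<Rightarrow> real" and x assume u: "u \<longlonglongrightarrow> x"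
  define r where "r n = B * (\<Sum>k\<in>K. \<bar>u n k - x k\<bar>)" for n
  have "(\<lambda>n. u n k) \<longlonglongrightarrow> x k" for k
    using continuous_on_tendsto_compose[OF continuous_on_product_coordinates u] by simp
  then have "r \<longlonglongrightarrow> B * (\<Sum>k\<in>K. \<bar>x k - x k\<bar>)"
    unfolding r_def by (intro tendsto_intros)
  then have r: "r \<longlonglongrightarrow> 0" by simp
  have "\<bar>sup_inner T a K (u n) - sup_inner T a K x\<bar> \<le> r n" for n
  proof -
    have "B * (\<Sum>k\<in>K. \<bar>x k - u n k\<bar>) = B * (\<Sum>k\<in>K. \<bar>u n k - x k\<bar>)"
      by (simp add: abs_minus_commute)
    then show ?thesis
      using sup_inner_le_add[OF T ab, of x "u n"] sup_inner_le_add[OF T ab, of "u n" x]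
      unfolding r_def abs_le_iff by linarith
  qed
  then have "\<forall>\<^sub>F n in sequentially. norm (sup_inner T a K (u n) - sup_inner T a K x) \<le> r n"
    by simp
  then show "(\<lambda>n. sup_inner T a K (u n)) \<longlonglongrightarrow> sup_inner T a K x"
    by (rule LIM_zero_cancel[OF Lim_null_comparison[OF _ r]])
qed

section \<open>Sign vectors\<close>

definition signs :: "'i set \<Rightarrow> ('i \<Rightarrow> real) set" where
  "signs K = PiE K (\<lambda>_. {-1, 1})"

lemma sum_signs_insert:
  "j \<notin> K \<Longrightarrow> (\<Sum>e\<in>signs (insert j K). h e) = (\<Sum>g\<in>signs K. h (g(j:=-1)) + h (g(j:=1)))"
  unfolding signs_def by (simp add: sum_PiE_insert sum.distrib)

lemma signs_cases: "e \<in> signs K \<Longrightarrow> k \<in> K \<Longrightarrow> e k = -1 \<or> e k = 1"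
  unfolding signs_def by auto

lemma abs_signs_le_1: "e \<in> signs K \<Longrightarrow> k \<in> K \<Longrightarrow> \<bar>e k\<bar> \<le> 1"
  using signs_cases by fastforce

lemma abs_sum_signs_mult_le:
  fixes a :: "'i \<Rightarrow> real"
  assumes e: "e \<in> signs K" and a: "\<forall>k\<in>K. \<bar>a k\<bar> \<le> B"
  shows "\<bar>\<Sum>k\<in>K. e k * a k\<bar> \<le> real (card K) * B"
proof (rule abs_sum_le_card_mult, intro ballI)
  fix k assume "k \<in> K"
  then have "\<bar>e k\<bar> * \<bar>a k\<bar> \<le> 1 * B" using abs_signs_le_1[OF e] a by (intro mult_mono) auto
  then show "\<bar>e k * a k\<bar> \<le> B" by (simp add: abs_mult)
qed

lemma card_signs: "finite K \<Longrightarrow> card (signs K) = 2 ^ card K"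
  unfolding signs_def by (simp add: card_PiE numeral_2_eq_2)

lemma sum_signs_uminus: "(\<Sum>e\<in>signs K. h (\<lambda>k\<in>K. - e k)) = (\<Sum>e\<in>signs K. h e)"
  by (rule sum_involution) (auto simp: signs_def PiE_def extensional_def fun_eq_iff)

text \<open>The map \<open>e \<mapsto> (\<lambda>k\<in>K. e k * sgn (g k))\<close>, with \<open>sgn 0\<close> read as \<open>1\<close>,
  is an involution of \<open>signs K\<close>.\<close>
lemma sum_signs_absorb_signs:
  assumes loc: "\<And>x. Phi (restrict x K) = Phi x"
  shows "(\<Sum>e\<in>signs K. Phi (\<lambda>k\<in>K. e k * g k)) = (\<Sum>e\<in>signs K. Phi (\<lambda>k. e k * \<bar>g k\<bar>))"
proof -
  define sg where "sg = (\<lambda>x::real. if x < 0 then -1 else (1::real))"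
  define s where "s = (\<lambda>e. \<lambda>k\<in>K. e k * sg (g k))"
  have inv: "\<forall>e\<in>signs K. s e \<in> signs K \<and> s (s e) = e"
    unfolding s_def signs_def sg_def by (auto simp: PiE_def Pi_def extensional_def fun_eq_iff)
  have "Phi (\<lambda>k\<in>K. e k * g k) = Phi (\<lambda>k. s e k * \<bar>g k\<bar>)" for e
  proof -
    have "Phi (\<lambda>k\<in>K. e k * g k) = Phi (restrict (\<lambda>k. s e k * \<bar>g k\<bar>) K)"
      by (intro arg_cong[where f=Phi] restrict_ext) (auto simp: s_def sg_def)
    then show ?thesis by (simp only: loc)
  qed
  then have "(\<Sum>e\<in>signs K. Phi (\<lambda>k\<in>K. e k * g k)) = (\<Sum>e\<in>signs K. Phi (\<lambda>k. s e k * \<bar>g k\<bar>))"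
    by simp
  also have "\<dots> = (\<Sum>e\<in>signs K. Phi (\<lambda>k. e k * \<bar>g k\<bar>))"
    by (rule sum_involution[OF inv, of "\<lambda>e. Phi (\<lambda>k. e k * \<bar>g k\<bar>)"])
  finally show ?thesis .
qed

section \<open>The contraction principle\<close>

text \<open>Pairing \<open>t\<close> with \<open>s\<close> and ordering them by \<open>a\<close>, the Lipschitz bound moves \<open>ph\<close> onto \<open>L * a\<close>.\<close>
lemma sup_plus_sup_minus_contraction:
  fixes d ph a :: "'t \<Rightarrow> real"
  assumes T: "T \<noteq> {}" and bd: "\<forall>t\<in>T. \<bar>d t\<bar> \<le> D" and ba: "\<forall>t\<in>T. \<bar>a t\<bar> \<le> B"
    and lip: "\<forall>t\<in>T. \<forall>s\<in>T. \<bar>ph t - ph s\<bar> \<le> L * \<bar>a t - a s\<bar>" and L: "L \<ge> 0"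
  shows "(SUP t\<in>T. d t + ph t) + (SUP t\<in>T. d t - ph t)
     \<le> (SUP t\<in>T. d t + L * a t) + (SUP t\<in>T. d t - L * a t)"
proof -
  define R where "R = (SUP t\<in>T. d t + L * a t) + (SUP t\<in>T. d t - L * a t)"
  have "\<forall>t\<in>T. \<bar>L * a t\<bar> \<le> L * B" using ba L by (simp add: abs_mult mult_left_mono)
  then have bplus: "bdd_above ((\<lambda>t. d t + L * a t) ` T)"
    and bminus: "bdd_above ((\<lambda>t. d t - L * a t) ` T)"
    using bd by (auto intro!: bdd_above_image_abs_le[where B = "D + L * B"] abs_triangle_ineq[THEN order_trans]
        abs_triangle_ineq4[THEN order_trans] add_mono)
  have lip1: "ph t - ph s \<le> L * \<bar>a t - a s\<bar>" if "t \<in> T" "s \<in> T" for t s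
    by (rule abs_le_D1) (use lip that in blast)
  have "(d t + ph t) + (d s - ph s) \<le> R" if "t \<in> T" "s \<in> T" for t s
  proof (cases "a t \<ge> a s")
    case True
    then have "ph t - ph s \<le> L * (a t - a s)" using lip1[OF that] by (simp add: abs_if)
    moreover have "d t + L * a t \<le> (SUP t\<in>T. d t + L * a t)" by (rule cSUP_upper[OF that(1) bplus])
    moreover have "d s - L * a s \<le> (SUP t\<in>T. d t - L * a t)" by (rule cSUP_upper[OF that(2) bminus])
    ultimately show ?thesis unfolding R_def by (simp add: algebra_simps)
  next
    case False
    then have "ph t - ph s \<le> L * (a s - a t)" using lip1[OF that] by (simp add: abs_if)
    moreover have "d s + L * a s \<le> (SUP t\<in>T. d t + L * a t)" by (rule cSUP_upper[OF that(2) bplus])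
    moreover have "d t - L * a t \<le> (SUP t\<in>T. d t - L * a t)" by (rule cSUP_upper[OF that(1) bminus])
    ultimately show ?thesis unfolding R_def by (simp add: algebra_simps)
  qed
  then have "(SUP t\<in>T. d t + ph t) \<le> R - (d s - ph s)" if "s \<in> T" for s
    by (intro cSUP_least[OF T]) (use that in force)
  then have "(SUP s\<in>T. d s - ph s) \<le> R - (SUP t\<in>T. d t + ph t)"
    by (intro cSUP_least[OF T]) force
  then show ?thesis unfolding R_def by simp
qed

text \<open>The contraction principle for Rademacher sums, stated with sums over all sign vectors
  instead of expectations; the offset \<open>c\<close> makes the induction over \<open>K\<close> go through.\<close>
lemma sum_signs_contraction:
  fixes a :: "'t \<Rightarrow> 'i \<Rightarrow> real" and ph :: "real \<Rightarrow> real" and c :: "'t \<Rightarrow> real"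
  assumes K: "finite K" and T: "T \<noteq> {}" and ba: "\<forall>t\<in>T. \<forall>k. \<bar>a t k\<bar> \<le> B"
    and bp: "\<forall>t\<in>T. \<forall>k. \<bar>ph (a t k)\<bar> \<le> B"
    and lip: "\<forall>t\<in>T. \<forall>s\<in>T. \<forall>k. \<bar>ph (a t k) - ph (a s k)\<bar> \<le> L * \<bar>a t k - a s k\<bar>"
    and L: "L \<ge> 0" and bc: "\<forall>t\<in>T. \<bar>c t\<bar> \<le> C"
  shows "(\<Sum>e\<in>signs K. SUP t\<in>T. c t + (\<Sum>k\<in>K. e k * ph (a t k)))
    \<le> (\<Sum>e\<in>signs K. SUP t\<in>T. c t + L * (\<Sum>k\<in>K. e k * a t k))"
  using K bc
proof (induction K arbitrary: c C rule: finite_induct)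
  case empty
  then show ?case by simp
next
  case (insert j K)
  have upd: "(\<Sum>k\<in>insert j K. (g(j:=y)) k * f k) = y * f j + (\<Sum>k\<in>K. g k * f k)" for g y and f :: "'i \<Rightarrow> real"
    using insert(1,2) by (simp add: sum.insert) (intro sum.cong; auto)
  define P where "P y g = (SUP t\<in>T. (c t + y * ph (a t j)) + (\<Sum>k\<in>K. g k * ph (a t k)))" for y g
  define Q where "Q y g = (SUP t\<in>T. (c t + y * ph (a t j)) + L * (\<Sum>k\<in>K. g k * a t k))" for y g
  have PQ: "(\<Sum>g\<in>signs K. P y g) \<le> (\<Sum>g\<in>signs K. Q y g)" if "\<bar>y\<bar> \<le> 1" for y
  proof -
    have "\<forall>t\<in>T. \<bar>c t + y * ph (a t j)\<bar> \<le> C + 1 * B"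
      using insert.prems bp that by (intro ballI abs_add_mult_le) auto
    then show ?thesis unfolding P_def Q_def by (intro insert.IH) simp
  qed
  have Q_pair: "Q (-1) g + Q 1 g \<le> (SUP t\<in>T. c t + L * (\<Sum>k\<in>K. g k * a t k) + L * a t j)
                     + (SUP t\<in>T. c t + L * (\<Sum>k\<in>K. g k * a t k) - L * a t j)" if g: "g \<in> signs K" for g
  proof -
    define d where "d t = c t + L * (\<Sum>k\<in>K. g k * a t k)" for t
    have "\<forall>t\<in>T. \<forall>k\<in>K. \<bar>a t k\<bar> \<le> B" using ba by blast
    then have "\<forall>t\<in>T. \<bar>d t\<bar> \<le> C + L * (real (card K) * B)"
      using insert.prems abs_sum_signs_mult_le[OF g] L unfolding d_def by (intro ballI abs_add_mult_le) auto
    then have "(SUP t\<in>T. d t + ph (a t j)) + (SUP t\<in>T. d t - ph (a t j))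
         \<le> (SUP t\<in>T. d t + L * a t j) + (SUP t\<in>T. d t - L * a t j)"
      by (rule sup_plus_sup_minus_contraction[OF T]) (use ba lip L in auto)
    moreover have "Q (-1) g = (SUP t\<in>T. d t - ph (a t j))" "Q 1 g = (SUP t\<in>T. d t + ph (a t j))"
      unfolding Q_def d_def by (simp_all add: algebra_simps)
    ultimately show ?thesis unfolding d_def by simp
  qed
  have "(\<Sum>e\<in>signs (insert j K). SUP t\<in>T. c t + (\<Sum>k\<in>insert j K. e k * ph (a t k)))
      = (\<Sum>g\<in>signs K. P (-1) g) + (\<Sum>g\<in>signs K. P 1 g)"
    unfolding sum_signs_insert[OF insert(2)] P_def upd by (simp add: algebra_simps sum.distrib)
  also have "\<dots> \<le> (\<Sum>g\<in>signs K. Q (-1) g) + (\<Sum>g\<in>signs K. Q 1 g)"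
    by (intro add_mono PQ) auto
  also have "\<dots> \<le> (\<Sum>g\<in>signs K. (SUP t\<in>T. c t + L * (\<Sum>k\<in>K. g k * a t k) + L * a t j)
                     + (SUP t\<in>T. c t + L * (\<Sum>k\<in>K. g k * a t k) - L * a t j))"
    unfolding sum.distrib[symmetric] by (intro sum_mono Q_pair)
  also have "\<dots> = (\<Sum>e\<in>signs (insert j K). SUP t\<in>T. c t + L * (\<Sum>k\<in>insert j K. e k * a t k))"
    unfolding sum_signs_insert[OF insert(2)] upd by (simp add: algebra_simps)
  finally show ?case .
qed

section \<open>Symmetrization\<close>

text \<open>Centering by an independent copy: the mean over \<open>w'\<close> of
  \<open>\<Sum>k\<in>K. f t (w' k)\<close> is \<open>card K\<close> times the mean of \<open>f t\<close> over \<open>I\<close>.\<close>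
lemma sup_sum_le_mean_plus_sup_differences:
  fixes f :: "'t \<Rightarrow> 'p \<Rightarrow> real"
  assumes K: "finite K" and I: "finite I" "I \<noteq> {}" and T: "T \<noteq> {}"
    and fb: "\<forall>t\<in>T. \<forall>p. \<bar>f t p\<bar> \<le> B"
  defines "\<Omega> \<equiv> PiE K (\<lambda>_. I)"
  shows "real (card \<Omega>) * (SUP t\<in>T. \<Sum>k\<in>K. f t (w k))
    \<le> real (card \<Omega>) * real (card K) * (SUP t\<in>T. (\<Sum>p\<in>I. f t p) / real (card I))
      + (\<Sum>w'\<in>\<Omega>. SUP t\<in>T. \<Sum>k\<in>K. (f t (w k) - f t (w' k)))"
proof -
  define N where "N = real (card \<Omega>)"
  define \<mu> where "\<mu> t = (\<Sum>p\<in>I. f t p) / real (card I)" for t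
  define R where "R = N * real (card K) * (SUP t\<in>T. \<mu> t) + (\<Sum>w'\<in>\<Omega>. SUP t\<in>T. \<Sum>k\<in>K. (f t (w k) - f t (w' k)))"
  have N: "N > 0" unfolding N_def \<Omega>_def using K I by (simp add: card_gt_0_iff finite_PiE PiE_eq_empty_iff)
  have cI: "real (card I) > 0" using I by (simp add: card_gt_0_iff)
  have bdd_mean: "bdd_above (\<mu> ` T)"
  proof (rule bdd_above_image_abs_le[where B = B], intro ballI)
    fix t assume "t \<in> T"
    then have "\<bar>\<Sum>p\<in>I. f t p\<bar> \<le> real (card I) * B" using fb by (intro abs_sum_le_card_mult) auto
    then show "\<bar>\<mu> t\<bar> \<le> B" using cI by (simp add: \<mu>_def abs_divide field_simps)
  qed
  have bdd_diff: "bdd_above ((\<lambda>t. \<Sum>k\<in>K. (f t (w k) - f t (w' k))) ` T)" for w'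
  proof (rule bdd_above_image_abs_le[where B = "real (card K) * (2 * B)"], intro ballI abs_sum_le_card_mult)
    fix t k assume "t \<in> T"
    then have "\<bar>f t (w k)\<bar> \<le> B" "\<bar>f t (w' k)\<bar> \<le> B" using fb by auto
    then show "\<bar>f t (w k) - f t (w' k)\<bar> \<le> 2 * B" by linarith
  qed
  have "N * (\<Sum>k\<in>K. f t (w k)) \<le> R" if t: "t \<in> T" for t
  proof -
    have coord: "(\<Sum>w'\<in>\<Omega>. f t (w' k)) = N * \<mu> t" if "k \<in> K" for k
      using sum_PiE_component[OF K that, of I "f t"] cI unfolding N_def \<mu>_def \<Omega>_def
      by (simp add: field_simps)
    have "(\<Sum>k\<in>K. \<Sum>w'\<in>\<Omega>. (f t (w k) - f t (w' k))) = (\<Sum>k\<in>K. N * f t (w k) - N * \<mu> t)"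
      by (rule sum.cong[OF refl]) (simp add: sum_subtractf coord N_def)
    then have "N * (\<Sum>k\<in>K. f t (w k)) = N * real (card K) * \<mu> t + (\<Sum>k\<in>K. \<Sum>w'\<in>\<Omega>. (f t (w k) - f t (w' k)))"
      by (simp add: sum_subtractf sum_distrib_left)
    also have "\<dots> = N * real (card K) * \<mu> t + (\<Sum>w'\<in>\<Omega>. \<Sum>k\<in>K. (f t (w k) - f t (w' k)))"
      by (simp only: sum.swap[of _ K])
    also have "\<dots> \<le> R"
      unfolding R_def using N by (intro add_mono mult_left_mono sum_mono cSUP_upper t bdd_mean bdd_diff) auto
    finally show ?thesis .
  qed
  then have "(SUP t\<in>T. \<Sum>k\<in>K. f t (w k)) \<le> R / N"
    using N by (intro cSUP_least[OF T]) (simp add: field_simps)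
  then show ?thesis using N unfolding R_def N_def \<mu>_def by (simp add: field_simps)
qed

text \<open>Exchanging \<open>w k\<close> and \<open>w' k\<close> for the coordinates with \<open>e k = -1\<close> is a bijection of
  \<open>\<Omega> \<times> \<Omega>\<close> that turns the differences into the signed differences.\<close>
lemma sum_sup_differences_le_sup_inner:
  fixes f :: "'t \<Rightarrow> 'p \<Rightarrow> real" and I :: "'p set" and e :: "'i \<Rightarrow> real"
  assumes T: "T \<noteq> {}" and fb: "\<forall>t\<in>T. \<forall>p. \<bar>f t p\<bar> \<le> B" and e: "e \<in> signs K"
  defines "\<Omega> \<equiv> PiE K (\<lambda>_. I)"
  shows "(\<Sum>w\<in>\<Omega>. \<Sum>w'\<in>\<Omega>. SUP t\<in>T. \<Sum>k\<in>K. (f t (w k) - f t (w' k)))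
     \<le> real (card \<Omega>) * (\<Sum>w\<in>\<Omega>. sup_inner T (\<lambda>t k. f t (w k)) K e + sup_inner T (\<lambda>t k. f t (w k)) K (\<lambda>k. - e k))"
proof -
  define A where "A x w = sup_inner T (\<lambda>t k. f t (w k)) K x" for x w
  define D where "D w w' = (SUP t\<in>T. \<Sum>k\<in>K. (f t (w k) - f t (w' k)))" for w w'
  define s where "s = (\<lambda>(w::'i\<Rightarrow>'p, w'::'i\<Rightarrow>'p).
    ((\<lambda>k. if e k = 1 then w k else w' k), (\<lambda>k. if e k = 1 then w' k else w k)))"
  have inv: "\<forall>x\<in>\<Omega>\<times>\<Omega>. s x \<in> \<Omega>\<times>\<Omega> \<and> s (s x) = x"
    unfolding s_def \<Omega>_def by (auto simp: PiE_def Pi_def extensional_def fun_eq_iff)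
  have D_swap: "D (fst (s x)) (snd (s x)) = (SUP t\<in>T. \<Sum>k\<in>K. e k * (f t (fst x k) - f t (snd x k)))" for x
    unfolding D_def s_def
    by (intro SUP_cong refl sum.cong) (auto simp: case_prod_beta dest!: signs_cases[OF e])
  have bf: "\<forall>t\<in>T. \<forall>k\<in>K. \<bar>f t (w k)\<bar> \<le> B" for w using fb by blast
  have signed: "(SUP t\<in>T. \<Sum>k\<in>K. e k * (f t (w k) - f t (w' k))) \<le> A e w + A (\<lambda>k. - e k) w'" for w w'
  proof -
    have "(SUP t\<in>T. \<Sum>k\<in>K. e k * (f t (w k) - f t (w' k)))
        = (SUP t\<in>T. (\<Sum>k\<in>K. e k * f t (w k)) + (\<Sum>k\<in>K. - e k * f t (w' k)))"
      by (intro SUP_cong refl) (simp add: sum.distrib[symmetric] algebra_simps)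
    also have "\<dots> \<le> A e w + A (\<lambda>k. - e k) w'"
      unfolding A_def sup_inner_def by (rule cSUP_add_le[OF T bdd_above_sup_inner[OF bf] bdd_above_sup_inner[OF bf]])
    finally show ?thesis .
  qed
  have "(\<Sum>w\<in>\<Omega>. \<Sum>w'\<in>\<Omega>. D w w') = (\<Sum>x\<in>\<Omega>\<times>\<Omega>. D (fst (s x)) (snd (s x)))"
    unfolding sum.cartesian_product sum_involution[OF inv, of "\<lambda>x. D (fst x) (snd x)"] by (simp add: case_prod_beta)
  also have "\<dots> \<le> (\<Sum>x\<in>\<Omega>\<times>\<Omega>. A e (fst x) + A (\<lambda>k. - e k) (snd x))"
    unfolding D_swap by (intro sum_mono signed)
  also have "\<dots> = (\<Sum>w\<in>\<Omega>. \<Sum>w'\<in>\<Omega>. A e w + A (\<lambda>k. - e k) w')"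
    unfolding sum.cartesian_product by (rule sum.cong) auto
  also have "\<dots> = real (card \<Omega>) * (\<Sum>w\<in>\<Omega>. A e w + A (\<lambda>k. - e k) w)"
    by (simp add: sum.distrib distrib_left sum_distrib_left)
  finally show ?thesis unfolding A_def D_def .
qed

lemma symmetrization:
  fixes f :: "'t \<Rightarrow> 'p \<Rightarrow> real"
  assumes K: "finite K" and I: "finite I" "I \<noteq> {}" and T: "T \<noteq> {}"
    and fb: "\<forall>t\<in>T. \<forall>p. \<bar>f t p\<bar> \<le> B"
  defines "\<Omega> \<equiv> PiE K (\<lambda>_. I)"
  shows "(\<Sum>w\<in>\<Omega>. SUP t\<in>T. \<Sum>k\<in>K. f t (w k))
    \<le> real (card \<Omega>) * (real (card K) * (SUP t\<in>T. (\<Sum>p\<in>I. f t p) / real (card I)))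
      + 2 / real (card (signs K)) * (\<Sum>w\<in>\<Omega>. \<Sum>e\<in>signs K. sup_inner T (\<lambda>t k. f t (w k)) K e)"
proof -
  define N where "N = real (card \<Omega>)"
  define E where "E = real (card (signs K))"
  define M where "M = (SUP t\<in>T. (\<Sum>p\<in>I. f t p) / real (card I))"
  define A where "A x w = sup_inner T (\<lambda>t k. f t (w k)) K x" for x w
  define DD where "DD = (\<Sum>w\<in>\<Omega>. \<Sum>w'\<in>\<Omega>. SUP t\<in>T. \<Sum>k\<in>K. (f t (w k) - f t (w' k)))"
  have N: "N > 0" unfolding N_def \<Omega>_def using K I by (simp add: card_gt_0_iff finite_PiE PiE_eq_empty_iff)
  have E: "E > 0" unfolding E_def using K by (simp add: card_signs)
  have flip: "(\<Sum>e\<in>signs K. A (\<lambda>k. - e k) w) = (\<Sum>e\<in>signs K. A e w)" for w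
  proof -
    have "(\<Sum>e\<in>signs K. A (\<lambda>k. - e k) w) = (\<Sum>e\<in>signs K. A (\<lambda>k\<in>K. - e k) w)"
      unfolding A_def by (intro sum.cong refl sup_inner_cong) simp
    then show ?thesis using sum_signs_uminus[of "\<lambda>x. A x w" K] by simp
  qed
  have "E * DD = (\<Sum>e\<in>signs K. DD)" by (simp add: E_def)
  also have "\<dots> \<le> (\<Sum>e\<in>signs K. N * (\<Sum>w\<in>\<Omega>. A e w + A (\<lambda>k. - e k) w))"
    unfolding DD_def N_def A_def \<Omega>_def by (intro sum_mono sum_sup_differences_le_sup_inner[OF T fb])
  also have "\<dots> = N * (\<Sum>e\<in>signs K. \<Sum>w\<in>\<Omega>. A e w + A (\<lambda>k. - e k) w)"
    by (simp add: sum_distrib_left)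
  also have "\<dots> = N * (\<Sum>w\<in>\<Omega>. \<Sum>e\<in>signs K. A e w + A (\<lambda>k. - e k) w)"
    by (subst sum.swap) (rule refl)
  also have "\<dots> = 2 * N * (\<Sum>w\<in>\<Omega>. \<Sum>e\<in>signs K. A e w)"
    by (simp add: sum.distrib flip sum_distrib_left mult.commute mult.left_commute)
  finally have DD: "DD / N \<le> 2 / E * (\<Sum>w\<in>\<Omega>. \<Sum>e\<in>signs K. A e w)"
    using N E by (simp add: field_simps)
  have "N * (\<Sum>w\<in>\<Omega>. SUP t\<in>T. \<Sum>k\<in>K. f t (w k)) \<le> (\<Sum>w\<in>\<Omega>. N * real (card K) * M
      + (\<Sum>w'\<in>\<Omega>. SUP t\<in>T. \<Sum>k\<in>K. (f t (w k) - f t (w' k))))"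
    unfolding sum_distrib_left N_def M_def \<Omega>_def
    by (intro sum_mono sup_sum_le_mean_plus_sup_differences[OF K I T fb])
  also have "\<dots> = N * (N * real (card K) * M) + DD"
    by (simp add: DD_def sum.distrib N_def)
  finally have "(\<Sum>w\<in>\<Omega>. SUP t\<in>T. \<Sum>k\<in>K. f t (w k)) \<le> N * (real (card K) * M) + DD / N"
    using N by (simp add: field_simps)
  with DD show ?thesis unfolding N_def E_def M_def A_def by linarith
qed

section \<open>Standard Gaussian vectors\<close>

definition gauss_vec :: "'i set \<Rightarrow> ('i \<Rightarrow> real) measure" where
  "gauss_vec K = PiM K (\<lambda>_. std_normal_distribution)"

definition gauss_abs_mean :: real where
  "gauss_abs_mean = integral\<^sup>L std_normal_distribution (\<lambda>x. \<bar>x\<bar>)"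

lemma sets_std_normal_distribution [measurable_cong]: "sets std_normal_distribution = sets borel"
  by simp

lemma prob_space_std_normal: "prob_space std_normal_distribution"
  using real_dist_normal_dist by (simp add: real_distribution_def)

lemma product_prob_space_std_normal: "product_prob_space (\<lambda>_. std_normal_distribution)"
  by (intro product_prob_spaceI) (simp add: prob_space_std_normal)

lemma gauss_abs_mean_eq: "gauss_abs_mean = sqrt (2 / pi)"
  using std_normal_distribution_odd_moments_abs[of 0] unfolding gauss_abs_mean_def by simp

lemma gauss_abs_mean_pos: "gauss_abs_mean > 0"
  unfolding gauss_abs_mean_eq by simp

lemma distr_std_normal_sign:
  assumes "s = -1 \<or> s = (1::real)"
  shows "distr std_normal_distribution std_normal_distribution (\<lambda>x. s * x) = std_normal_distribution"
  using assms
proof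
  assume s: "s = -1"
  interpret prob_space std_normal_distribution by (rule prob_space_std_normal)
  have "distributed std_normal_distribution lborel (\<lambda>x. x) (\<lambda>x. ennreal (normal_density 0 1 x))"
    by (auto simp: distributed_def distr_id2)
  then have "distributed std_normal_distribution lborel (\<lambda>x. 0 + (-1) * x)
      (\<lambda>x. ennreal (normal_density (0 + (-1) * 0) (\<bar>-1\<bar> * 1) x))"
    by (rule normal_density_affine) auto
  then have "distr std_normal_distribution lborel uminus = std_normal_distribution"
    unfolding distributed_def by simp
  moreover have "distr std_normal_distribution std_normal_distribution uminus
      = distr std_normal_distribution lborel uminus"
    by (rule distr_cong) auto
  ultimately show ?thesis using s by simp
next
  assume "s = 1"
  then show ?thesis by (simp add: distr_id2)
qed

lemma distr_PiM_componentwise: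
  fixes K :: "'i set" and f :: "'i \<Rightarrow> 'a \<Rightarrow> 'a"
  assumes K: "finite K" and M: "prob_space M" and fm: "\<And>i. i \<in> K \<Longrightarrow> f i \<in> measurable M M"
    and fd: "\<And>i. i \<in> K \<Longrightarrow> distr M M (f i) = M"
  shows "distr (PiM K (\<lambda>_. M)) (PiM K (\<lambda>_. M)) (\<lambda>x. \<lambda>i\<in>K. f i (x i)) = PiM K (\<lambda>_. M)"
proof -
  interpret product_prob_space "\<lambda>_. M" by (intro product_prob_spaceI M)
  have meas: "(\<lambda>x. \<lambda>i\<in>K. f i (x i)) \<in> measurable (PiM K (\<lambda>_. M)) (PiM K (\<lambda>_. M))"
  proof (rule measurable_restrict)
    fix i assume i: "i \<in> K"
    show "(\<lambda>x. f i (x i)) \<in> measurable (PiM K (\<lambda>_. M)) M"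
      using measurable_compose[OF measurable_component_singleton[OF i] fm[OF i]] .
  qed
  show ?thesis
  proof (rule PiM_eqI[OF K])
    fix A assume A: "\<And>i. i \<in> K \<Longrightarrow> A i \<in> sets M"
    have "emeasure (distr (PiM K (\<lambda>_. M)) (PiM K (\<lambda>_. M)) (\<lambda>x. \<lambda>i\<in>K. f i (x i))) (Pi\<^sub>E K A)
      = emeasure (PiM K (\<lambda>_. M)) ((\<lambda>x. \<lambda>i\<in>K. f i (x i)) -` Pi\<^sub>E K A \<inter> space (PiM K (\<lambda>_. M)))"
      by (rule emeasure_distr[OF meas]) (intro sets_PiM_I_finite K A)
    also have "(\<lambda>x. \<lambda>i\<in>K. f i (x i)) -` Pi\<^sub>E K A \<inter> space (PiM K (\<lambda>_. M)) = Pi\<^sub>E K (\<lambda>i. f i -` A i \<inter> space M)"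
      by (auto simp: space_PiM PiE_def Pi_def extensional_def)
    also have "emeasure (PiM K (\<lambda>_. M)) (Pi\<^sub>E K (\<lambda>i. f i -` A i \<inter> space M))
        = (\<Prod>i\<in>K. emeasure M (f i -` A i \<inter> space M))"
      by (rule emeasure_PiM[OF K]) (use measurable_sets[OF fm A] in auto)
    also have "\<dots> = (\<Prod>i\<in>K. emeasure (distr M M (f i)) (A i))"
      by (intro prod.cong refl emeasure_distr[symmetric] fm A)
    also have "\<dots> = (\<Prod>i\<in>K. emeasure M (A i))"
      by (intro prod.cong refl) (simp add: fd)
    finally show "emeasure (distr (PiM K (\<lambda>_. M)) (PiM K (\<lambda>_. M)) (\<lambda>x. \<lambda>i\<in>K. f i (x i))) (Pi\<^sub>E K A)
        = (\<Prod>i\<in>K. emeasure M (A i))" .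
  qed simp
qed

lemma measurable_gauss_vec_sign_flip:
  "(\<lambda>g. \<lambda>k\<in>K. e k * g k) \<in> measurable (gauss_vec K) (gauss_vec K)"
  unfolding gauss_vec_def
proof (rule measurable_restrict)
  fix i assume i: "i \<in> K"
  have "(\<lambda>x. e i * x) \<in> measurable std_normal_distribution std_normal_distribution"
    by (simp add: measurable_cong_sets[OF sets_std_normal_distribution sets_std_normal_distribution])
  from measurable_compose[OF measurable_component_singleton[OF i] this]
  show "(\<lambda>x. e i * x i) \<in> measurable (PiM K (\<lambda>_. std_normal_distribution)) std_normal_distribution"
    by simp
qed

lemma distr_gauss_vec_sign_flip:
  assumes K: "finite K" and e: "e \<in> signs K"
  shows "distr (gauss_vec K) (gauss_vec K) (\<lambda>g. \<lambda>k\<in>K. e k * g k) = gauss_vec K"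
  unfolding gauss_vec_def
proof (rule distr_PiM_componentwise[OF K prob_space_std_normal])
  fix i assume "i \<in> K"
  then show "distr std_normal_distribution std_normal_distribution (\<lambda>x. e i * x) = std_normal_distribution"
    by (intro distr_std_normal_sign signs_cases[OF e])
qed (simp add: measurable_cong_sets[OF sets_std_normal_distribution sets_std_normal_distribution])

lemma measurable_gauss_vec_component: "(\<lambda>g. g k) \<in> borel_measurable (gauss_vec K)"
proof (cases "k \<in> K")
  case True
  then have "(\<lambda>g. g k) \<in> measurable (gauss_vec K) std_normal_distribution"
    unfolding gauss_vec_def by (rule measurable_component_singleton)
  then show ?thesis by (simp add: measurable_cong_sets[OF refl sets_std_normal_distribution])
next
  case False
  have "(\<lambda>g. undefined) \<in> borel_measurable (gauss_vec K)" by simp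
  then show ?thesis
    by (rule measurable_cong[THEN iffD1, rotated])
      (use False in \<open>auto simp: gauss_vec_def space_PiM PiE_def extensional_def\<close>)
qed

lemma integral_gauss_vec_component:
  fixes f :: "real \<Rightarrow> real"
  assumes k: "k \<in> K" and f: "f \<in> borel_measurable borel"
  shows "integral\<^sup>L (gauss_vec K) (\<lambda>g. f (g k)) = integral\<^sup>L std_normal_distribution f"
    and "integrable std_normal_distribution f \<Longrightarrow> integrable (gauss_vec K) (\<lambda>g. f (g k))"
proof -
  have comp: "(\<lambda>g. g k) \<in> measurable (gauss_vec K) std_normal_distribution"
    unfolding gauss_vec_def using k by (rule measurable_component_singleton)
  have distr: "distr (gauss_vec K) std_normal_distribution (\<lambda>g. g k) = std_normal_distribution"
    unfolding gauss_vec_def using k by (rule product_prob_space.PiM_component[OF product_prob_space_std_normal])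
  have fm: "f \<in> borel_measurable std_normal_distribution"
    using f by (simp add: measurable_cong_sets[OF sets_std_normal_distribution refl])
  show "integral\<^sup>L (gauss_vec K) (\<lambda>g. f (g k)) = integral\<^sup>L std_normal_distribution f"
    using integral_distr[OF comp fm] distr by simp
  show "integrable (gauss_vec K) (\<lambda>g. f (g k))" if "integrable std_normal_distribution f"
    using integrable_distr_eq[OF comp fm] distr that by simp
qed

lemma integrable_std_normal_abs: "integrable std_normal_distribution (\<lambda>x. \<bar>x\<bar>)"
  using integrable_abs[OF integrable_std_normal_distribution_moment[of 1]] by simp

lemma gauss_vec_abs_component:
  assumes "k \<in> K"
  shows "integrable (gauss_vec K) (\<lambda>g. \<bar>g k\<bar>)" and "integral\<^sup>L (gauss_vec K) (\<lambda>g. \<bar>g k\<bar>) = gauss_abs_mean"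
proof -
  show "integrable (gauss_vec K) (\<lambda>g. \<bar>g k\<bar>)"
    by (rule integral_gauss_vec_component(2)[OF assms _ integrable_std_normal_abs]) simp
  show "integral\<^sup>L (gauss_vec K) (\<lambda>g. \<bar>g k\<bar>) = gauss_abs_mean"
    unfolding gauss_abs_mean_def by (rule integral_gauss_vec_component(1)[OF assms]) simp
qed

lemma gauss_vec_linear_form:
  fixes w :: "'i \<Rightarrow> real"
  assumes K: "finite K"
  shows "integrable (gauss_vec K) (\<lambda>g. \<Sum>k\<in>K. g k * w k)"
    and "integral\<^sup>L (gauss_vec K) (\<lambda>g. \<Sum>k\<in>K. g k * w k) = 0"
proof -
  have id: "integrable std_normal_distribution (\<lambda>x. x)"
    using integrable_std_normal_distribution_moment[of 1] by simp
  have "integral\<^sup>L std_normal_distribution (\<lambda>x. x) = 0"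
    using integral_std_normal_distribution_moment_odd[of 1] by simp
  then have int0: "integral\<^sup>L (gauss_vec K) (\<lambda>g. g k) = 0" if "k \<in> K" for k
    using integral_gauss_vec_component(1)[OF that, of "\<lambda>x. x"] by simp
  have int: "integrable (gauss_vec K) (\<lambda>g. g k)" if "k \<in> K" for k
    by (rule integral_gauss_vec_component(2)[OF that _ id]) simp
  show "integrable (gauss_vec K) (\<lambda>g. \<Sum>k\<in>K. g k * w k)"
    using int by simp
  show "integral\<^sup>L (gauss_vec K) (\<lambda>g. \<Sum>k\<in>K. g k * w k) = 0"
    using int int0 by (subst Bochner_Integration.integral_sum) simp_all
qed

lemma measurable_continuous_comp:
  fixes Phi :: "('i::countable \<Rightarrow> real) \<Rightarrow> real"
  assumes c: "continuous_on UNIV Phi" and h: "\<And>k. (\<lambda>w. h w k) \<in> borel_measurable M"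
  shows "(\<lambda>w. Phi (h w)) \<in> borel_measurable M"
proof -
  have "h \<in> borel_measurable M" by (rule measurable_coordinatewise_then_product) (rule h)
  then show ?thesis using measurable_compose[OF _ borel_measurable_continuous_onI[OF c]] by blast
qed

lemma integrable_gauss_vec_linear_growth:
  fixes Phi :: "('i::countable \<Rightarrow> real) \<Rightarrow> real"
  assumes K: "finite K" and c: "continuous_on UNIV Phi" and C: "C \<ge> 0"
    and bd: "\<And>x. \<bar>Phi x\<bar> \<le> C * (\<Sum>k\<in>K. \<bar>x k\<bar>)"
    and hm: "\<And>k. (\<lambda>g. h g k) \<in> borel_measurable (gauss_vec K)"
    and hb: "\<And>g k. k \<in> K \<Longrightarrow> \<bar>h g k\<bar> \<le> \<bar>g k\<bar>"
  shows "integrable (gauss_vec K) (\<lambda>g. Phi (h g))"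
proof (rule Bochner_Integration.integrable_bound[where f="\<lambda>g. C * (\<Sum>k\<in>K. \<bar>g k\<bar>)"])
  have "integrable (gauss_vec K) (\<lambda>g. \<Sum>k\<in>K. \<bar>g k\<bar>)"
    by (intro Bochner_Integration.integrable_sum gauss_vec_abs_component(1))
  then show "integrable (gauss_vec K) (\<lambda>g. C * (\<Sum>k\<in>K. \<bar>g k\<bar>))" by simp
  show "(\<lambda>g. Phi (h g)) \<in> borel_measurable (gauss_vec K)" by (rule measurable_continuous_comp[OF c hm])
  have "\<bar>Phi (h g)\<bar> \<le> C * (\<Sum>k\<in>K. \<bar>g k\<bar>)" for g
  proof -
    have "\<bar>Phi (h g)\<bar> \<le> C * (\<Sum>k\<in>K. \<bar>h g k\<bar>)" by (rule bd)
    also have "\<dots> \<le> C * (\<Sum>k\<in>K. \<bar>g k\<bar>)" by (intro mult_left_mono sum_mono hb C)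
    finally show ?thesis .
  qed
  then show "AE g in gauss_vec K. norm (Phi (h g)) \<le> norm (C * (\<Sum>k\<in>K. \<bar>g k\<bar>))"
    by (intro AE_I2) (simp add: sum_nonneg C)
qed

text \<open>Sign flips preserve the Gaussian measure, and the signs of \<open>g\<close> can then be absorbed into the
  sign vector.\<close>
lemma integral_gauss_vec_sign_average:
  fixes Phi :: "('i::countable \<Rightarrow> real) \<Rightarrow> real"
  assumes K: "finite K" and c: "continuous_on UNIV Phi" and C: "C \<ge> 0"
    and bd: "\<And>x. \<bar>Phi x\<bar> \<le> C * (\<Sum>k\<in>K. \<bar>x k\<bar>)"
    and loc: "\<And>x. Phi (restrict x K) = Phi x"
  shows "(\<And>e. e \<in> signs K \<Longrightarrow> integrable (gauss_vec K) (\<lambda>g. Phi (\<lambda>k. e k * \<bar>g k\<bar>)))"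
    and "real (card (signs K)) * integral\<^sup>L (gauss_vec K) Phi
      = integral\<^sup>L (gauss_vec K) (\<lambda>g. \<Sum>e\<in>signs K. Phi (\<lambda>k. e k * \<bar>g k\<bar>))"
proof -
  have hb: "\<bar>e k * x\<bar> \<le> \<bar>x\<bar>" if "e \<in> signs K" "k \<in> K" for e k x
    using abs_signs_le_1[OF that] by (simp add: abs_mult mult_left_le_one_le)
  show "integrable (gauss_vec K) (\<lambda>g. Phi (\<lambda>k. e k * \<bar>g k\<bar>))" if e: "e \<in> signs K" for e
  proof (rule integrable_gauss_vec_linear_growth[OF K c C bd])
    fix k show "(\<lambda>g. e k * \<bar>g k\<bar>) \<in> borel_measurable (gauss_vec K)"
      by (intro borel_measurable_times borel_measurable_abs measurable_gauss_vec_component) simp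
  next
    fix g k assume "k \<in> K"
    then show "\<bar>e k * \<bar>g k\<bar>\<bar> \<le> \<bar>g k\<bar>" using hb[OF e, of k "\<bar>g k\<bar>"] by simp
  qed
  have flip_int: "integrable (gauss_vec K) (\<lambda>g. Phi (\<lambda>k\<in>K. e k * g k))" if e: "e \<in> signs K" for e
  proof (rule integrable_gauss_vec_linear_growth[OF K c C bd])
    fix k show "(\<lambda>g. (\<lambda>k\<in>K. e k * g k) k) \<in> borel_measurable (gauss_vec K)"
      by (cases "k \<in> K") (auto intro!: borel_measurable_times measurable_gauss_vec_component)
  next
    fix g k assume "k \<in> K"
    then show "\<bar>(\<lambda>k\<in>K. e k * g k) k\<bar> \<le> \<bar>g k\<bar>" using hb[OF e, of k "g k"] by simp
  qed
  have Pm: "Phi \<in> borel_measurable (gauss_vec K)"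
    using measurable_continuous_comp[OF c, where h="\<lambda>g. g", OF measurable_gauss_vec_component] by simp
  have flip_eq: "integral\<^sup>L (gauss_vec K) Phi = integral\<^sup>L (gauss_vec K) (\<lambda>g. Phi (\<lambda>k\<in>K. e k * g k))"
    if "e \<in> signs K" for e
    using integral_distr[OF measurable_gauss_vec_sign_flip[where K=K and e=e] Pm] distr_gauss_vec_sign_flip[OF K that]
    by simp
  have "real (card (signs K)) * integral\<^sup>L (gauss_vec K) Phi = (\<Sum>e\<in>signs K. integral\<^sup>L (gauss_vec K) Phi)"
    by simp
  also have "\<dots> = (\<Sum>e\<in>signs K. integral\<^sup>L (gauss_vec K) (\<lambda>g. Phi (\<lambda>k\<in>K. e k * g k)))"
    by (rule sum.cong[OF refl]) (rule flip_eq)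
  also have "\<dots> = integral\<^sup>L (gauss_vec K) (\<lambda>g. \<Sum>e\<in>signs K. Phi (\<lambda>k\<in>K. e k * g k))"
    by (rule Bochner_Integration.integral_sum[symmetric]) (rule flip_int)
  also have "\<dots> = integral\<^sup>L (gauss_vec K) (\<lambda>g. \<Sum>e\<in>signs K. Phi (\<lambda>k. e k * \<bar>g k\<bar>))"
    by (intro Bochner_Integration.integral_cong refl sum_signs_absorb_signs loc)
  finally show "real (card (signs K)) * integral\<^sup>L (gauss_vec K) Phi
      = integral\<^sup>L (gauss_vec K) (\<lambda>g. \<Sum>e\<in>signs K. Phi (\<lambda>k. e k * \<bar>g k\<bar>))" .
qed

section \<open>Rademacher sums versus Gaussian sums\<close>

text \<open>For fixed \<open>e\<close>, each linear form \<open>\<Sum>k\<in>K. e k * a t k\<close> is the expectation of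
  \<open>\<Sum>k\<in>K. e k * \<bar>g k\<bar> * a t k\<close> divided by \<open>gauss_abs_mean\<close>; Jensen's inequality for the supremum and
  the sign average of the Gaussian measure do the rest.\<close>
lemma sum_signs_sup_inner_le_gauss:
  fixes a :: "'t \<Rightarrow> 'i::countable \<Rightarrow> real"
  assumes K: "finite K" and T: "T \<noteq> {}" and ab: "\<forall>t\<in>T. \<forall>k\<in>K. \<bar>a t k\<bar> \<le> B"
  shows "(\<Sum>e\<in>signs K. sup_inner T a K e)
    \<le> real (card (signs K)) / gauss_abs_mean * integral\<^sup>L (gauss_vec K) (sup_inner T a K)"
proof -
  have c: "continuous_on UNIV (sup_inner T a K)" by (rule continuous_on_sup_inner[OF T ab])
  have bd: "\<bar>sup_inner T a K x\<bar> \<le> \<bar>B\<bar> * (\<Sum>k\<in>K. \<bar>x k\<bar>)" for x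
  proof -
    have "B * (\<Sum>k\<in>K. \<bar>x k\<bar>) \<le> \<bar>B\<bar> * (\<Sum>k\<in>K. \<bar>x k\<bar>)" by (intro mult_right_mono) (auto intro: sum_nonneg)
    then show ?thesis using abs_sup_inner_le[OF T ab, of x] by linarith
  qed
  have loc: "sup_inner T a K (restrict x K) = sup_inner T a K x" for x
    by (intro sup_inner_cong) simp
  note avg = integral_gauss_vec_sign_average[OF K c abs_ge_zero bd loc]
  have single: "gauss_abs_mean * sup_inner T a K e
      \<le> integral\<^sup>L (gauss_vec K) (\<lambda>g. sup_inner T a K (\<lambda>k. e k * \<bar>g k\<bar>))" if e: "e \<in> signs K" for e
  proof -
    have "gauss_abs_mean * (\<Sum>k\<in>K. e k * a t k) \<le> integral\<^sup>L (gauss_vec K) (\<lambda>g. sup_inner T a K (\<lambda>k. e k * \<bar>g k\<bar>))"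
      if t: "t \<in> T" for t
    proof -
      have int: "integrable (gauss_vec K) (\<lambda>g. \<Sum>k\<in>K. e k * \<bar>g k\<bar> * a t k)"
        using gauss_vec_abs_component(1)[of _ K] by simp
      have "gauss_abs_mean * (\<Sum>k\<in>K. e k * a t k) = integral\<^sup>L (gauss_vec K) (\<lambda>g. \<Sum>k\<in>K. e k * \<bar>g k\<bar> * a t k)"
        using gauss_vec_abs_component[of _ K]
        by (subst Bochner_Integration.integral_sum) (simp_all add: sum_distrib_left mult_ac)
      also have "\<dots> \<le> integral\<^sup>L (gauss_vec K) (\<lambda>g. sup_inner T a K (\<lambda>k. e k * \<bar>g k\<bar>))"
        by (rule integral_mono[OF int avg(1)[OF e]]) (rule sup_inner_upper[OF t ab])
      finally show ?thesis .
    qed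
    then have "(SUP t\<in>T. gauss_abs_mean * (\<Sum>k\<in>K. e k * a t k))
        \<le> integral\<^sup>L (gauss_vec K) (\<lambda>g. sup_inner T a K (\<lambda>k. e k * \<bar>g k\<bar>))"
      by (intro cSUP_least[OF T])
    then show ?thesis unfolding sup_inner_def[of T a K e]
      using cSUP_cmult[OF less_imp_le[OF gauss_abs_mean_pos] T bdd_above_sup_inner[OF ab]] by simp
  qed
  have "gauss_abs_mean * (\<Sum>e\<in>signs K. sup_inner T a K e)
      \<le> (\<Sum>e\<in>signs K. integral\<^sup>L (gauss_vec K) (\<lambda>g. sup_inner T a K (\<lambda>k. e k * \<bar>g k\<bar>)))"
    unfolding sum_distrib_left by (intro sum_mono single)
  also have "\<dots> = real (card (signs K)) * integral\<^sup>L (gauss_vec K) (sup_inner T a K)"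
    using avg by (subst Bochner_Integration.integral_sum[symmetric]) auto
  finally show ?thesis using gauss_abs_mean_pos by (simp add: field_simps)
qed

section \<open>A lower bound for the Gaussian width\<close>

lemma abs_ge_quadratic_minus_quartic:
  fixes x s :: real
  assumes s: "s > 0"
  shows "x\<^sup>2 / s - 4/27 * x^4 / s^3 \<le> \<bar>x\<bar>"
proof -
  define v where "v = \<bar>x\<bar> / s"
  have v: "v \<ge> 0" unfolding v_def using s by simp
  have "0 \<le> 4/27 * v * (v - 3/2)\<^sup>2 * (v + 3)" using v by simp
  also have "4/27 * v * (v - 3/2)\<^sup>2 * (v + 3) = v - v\<^sup>2 + 4/27 * v^4"
    by (simp add: power2_eq_square power4_eq_xxxx field_simps)
  finally have aux: "v\<^sup>2 - 4/27 * v^4 \<le> v" by simp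
  have x2: "x\<^sup>2 = s\<^sup>2 * v\<^sup>2" and x4: "x^4 = s^4 * v^4" unfolding v_def using s by (simp_all add: power_divide)
  have "x\<^sup>2 / s - 4/27 * x^4 / s^3 = s * (v\<^sup>2 - 4/27 * v^4)"
    unfolding x2 x4 using s by (simp add: field_simps power2_eq_square power3_eq_cube power4_eq_xxxx)
  also have "\<dots> \<le> s * v" by (rule mult_left_mono[OF aux]) (use s in simp)
  also have "s * v = \<bar>x\<bar>" unfolding v_def using s by simp
  finally show ?thesis .
qed

lemma sum_signs_moments:
  fixes y :: "'i \<Rightarrow> real"
  assumes K: "finite K"
  shows "(\<Sum>e\<in>signs K. (\<Sum>k\<in>K. e k * y k)\<^sup>2) = real (card (signs K)) * (\<Sum>k\<in>K. (y k)\<^sup>2)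
       \<and> (\<Sum>e\<in>signs K. (\<Sum>k\<in>K. e k * y k)^4) \<le> 3 * real (card (signs K)) * (\<Sum>k\<in>K. (y k)\<^sup>2)\<^sup>2"
  using K
proof (induction K rule: finite_induct)
  case empty
  then show ?case by (simp add: signs_def)
next
  case (insert j K)
  define X where "X g = (\<Sum>k\<in>K. g k * y k)" for g
  define Q where "Q = (\<Sum>k\<in>K. (y k)\<^sup>2)"
  define E where "E = real (card (signs K))"
  have card: "real (card (signs (insert j K))) = 2 * E"
    unfolding E_def using insert(1,2) by (simp add: card_signs)
  have Q_insert: "(\<Sum>k\<in>insert j K. (y k)\<^sup>2) = Q + (y j)\<^sup>2" unfolding Q_def using insert(1,2) by simp
  have upd: "(\<Sum>k\<in>insert j K. (g(j:=s)) k * y k) = s * y j + X g" for g s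
    unfolding X_def using insert(1,2) by (simp add: sum.insert) (intro sum.cong; auto)
  have IH2: "(\<Sum>g\<in>signs K. (X g)\<^sup>2) = E * Q" and IH4: "(\<Sum>g\<in>signs K. (X g)^4) \<le> 3 * E * Q\<^sup>2"
    using insert(3) unfolding X_def Q_def E_def by auto
  have "(\<Sum>e\<in>signs (insert j K). (\<Sum>k\<in>insert j K. e k * y k)\<^sup>2) = (\<Sum>g\<in>signs K. 2 * (X g)\<^sup>2 + 2 * (y j)\<^sup>2)"
    unfolding sum_signs_insert[OF insert(2)] upd
    by (intro sum.cong refl) (simp add: power2_eq_square algebra_simps)
  also have "\<dots> = 2 * E * Q + 2 * E * (y j)\<^sup>2"
    by (simp add: sum.distrib sum_distrib_left[symmetric] IH2 E_def)
  finally have M2: "(\<Sum>e\<in>signs (insert j K). (\<Sum>k\<in>insert j K. e k * y k)\<^sup>2) = 2 * E * Q + 2 * E * (y j)\<^sup>2" .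
  have "(\<Sum>e\<in>signs (insert j K). (\<Sum>k\<in>insert j K. e k * y k)^4)
      = (\<Sum>g\<in>signs K. 2 * (X g)^4 + 12 * (y j)\<^sup>2 * (X g)\<^sup>2 + 2 * (y j)^4)"
    unfolding sum_signs_insert[OF insert(2)] upd
    by (intro sum.cong refl) (simp add: power2_eq_square power4_eq_xxxx algebra_simps)
  also have "\<dots> = 2 * (\<Sum>g\<in>signs K. (X g)^4) + 12 * (y j)\<^sup>2 * (E * Q) + 2 * E * (y j)^4"
    by (simp add: sum.distrib sum_distrib_left[symmetric] IH2 E_def)
  also have "\<dots> \<le> 3 * (2 * E) * (Q + (y j)\<^sup>2)\<^sup>2"
  proof -
    have "0 \<le> 4 * E * (y j)^4" unfolding E_def by simp
    then show ?thesis using IH4 by (simp add: power2_eq_square power4_eq_xxxx algebra_simps)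
  qed
  finally show ?case unfolding card Q_insert using M2 by (simp add: algebra_simps)
qed

text \<open>The constant \<open>5/9\<close> comes from testing \<open>\<bar>x\<bar> \<ge> x\<^sup>2/s - 4/27 * x^4/s^3\<close> with
  \<open>s = sqrt (\<Sum>k\<in>K. (y k)\<^sup>2)\<close> against the second and fourth moments.\<close>
lemma khintchine_lower_bound:
  fixes y :: "'i \<Rightarrow> real"
  assumes K: "finite K"
  shows "5/9 * real (card (signs K)) * sqrt (\<Sum>k\<in>K. (y k)\<^sup>2) \<le> (\<Sum>e\<in>signs K. \<bar>\<Sum>k\<in>K. e k * y k\<bar>)"
proof (cases "(\<Sum>k\<in>K. (y k)\<^sup>2) = 0")
  case True
  then show ?thesis by (simp add: sum_nonneg)
next
  case False
  define Q where "Q = (\<Sum>k\<in>K. (y k)\<^sup>2)"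
  define E where "E = real (card (signs K))"
  define s where "s = sqrt Q"
  have Q0: "Q > 0" using False unfolding Q_def by (metis less_eq_real_def sum_nonneg zero_le_power2)
  have s0: "s > 0" unfolding s_def using Q0 by simp
  have ss: "s\<^sup>2 = Q" unfolding s_def using Q0 by simp
  note mom = sum_signs_moments[OF K, of y]
  have "(\<Sum>e\<in>signs K. \<bar>\<Sum>k\<in>K. e k * y k\<bar>)
      \<ge> (\<Sum>e\<in>signs K. (\<Sum>k\<in>K. e k * y k)\<^sup>2 / s - 4/27 * (\<Sum>k\<in>K. e k * y k)^4 / s^3)"
    by (rule sum_mono) (rule abs_ge_quadratic_minus_quartic[OF s0])
  also have "(\<Sum>e\<in>signs K. (\<Sum>k\<in>K. e k * y k)\<^sup>2 / s - 4/27 * (\<Sum>k\<in>K. e k * y k)^4 / s^3)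
     = (\<Sum>e\<in>signs K. (\<Sum>k\<in>K. e k * y k)\<^sup>2) / s - 4/27 * (\<Sum>e\<in>signs K. (\<Sum>k\<in>K. e k * y k)^4) / s^3"
    by (simp add: sum_subtractf sum_divide_distrib sum_distrib_left)
  also have "\<dots> \<ge> E * Q / s - 4/27 * (3 * E * Q\<^sup>2) / s^3"
  proof -
    have "4/27 * (\<Sum>e\<in>signs K. (\<Sum>k\<in>K. e k * y k)^4) / s^3 \<le> 4/27 * (3 * E * Q\<^sup>2) / s^3"
      using mom s0 unfolding E_def Q_def by (intro divide_right_mono mult_left_mono) auto
    then show ?thesis using mom unfolding E_def Q_def by simp
  qed
  also have "E * Q / s - 4/27 * (3 * E * Q\<^sup>2) / s^3 = 5/9 * E * s"
    unfolding ss[symmetric] using s0 by (simp add: field_simps power2_eq_square power3_eq_cube)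
  finally show ?thesis unfolding E_def s_def Q_def by simp
qed

lemma sum_square_mult_abs_le:
  fixes z g :: "'i \<Rightarrow> real"
  shows "(\<Sum>k\<in>K. (z k)\<^sup>2 * \<bar>g k\<bar>) \<le> sqrt (\<Sum>k\<in>K. (z k)\<^sup>2) * sqrt (\<Sum>k\<in>K. (z k * \<bar>g k\<bar>)\<^sup>2)"
proof -
  have "(\<Sum>k\<in>K. \<bar>z k\<bar> * (\<bar>z k\<bar> * \<bar>g k\<bar>))\<^sup>2 \<le> (\<Sum>k\<in>K. \<bar>z k\<bar>\<^sup>2) * (\<Sum>k\<in>K. (\<bar>z k\<bar> * \<bar>g k\<bar>)\<^sup>2)"
    by (rule Cauchy_Schwarz_ineq_sum)
  moreover have "(\<Sum>k\<in>K. \<bar>z k\<bar> * (\<bar>z k\<bar> * \<bar>g k\<bar>)) = (\<Sum>k\<in>K. (z k)\<^sup>2 * \<bar>g k\<bar>)"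
    by (intro sum.cong refl) (simp add: power2_eq_square abs_mult_self_eq mult.assoc[symmetric])
  moreover have "(\<Sum>k\<in>K. (\<bar>z k\<bar> * \<bar>g k\<bar>)\<^sup>2) = (\<Sum>k\<in>K. (z k * \<bar>g k\<bar>)\<^sup>2)"
    by (intro sum.cong refl) (simp add: power_mult_distrib)
  ultimately have "(\<Sum>k\<in>K. (z k)\<^sup>2 * \<bar>g k\<bar>)\<^sup>2 \<le> (\<Sum>k\<in>K. (z k)\<^sup>2) * (\<Sum>k\<in>K. (z k * \<bar>g k\<bar>)\<^sup>2)"
    by simp
  then have "(\<Sum>k\<in>K. (z k)\<^sup>2 * \<bar>g k\<bar>) \<le> sqrt ((\<Sum>k\<in>K. (z k)\<^sup>2) * (\<Sum>k\<in>K. (z k * \<bar>g k\<bar>)\<^sup>2))"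
    by (rule real_le_rsqrt)
  then show ?thesis by (simp add: real_sqrt_mult)
qed

lemma khintchine_weighted_lower_bound:
  fixes z g :: "'i \<Rightarrow> real"
  assumes K: "finite K"
  shows "5/9 * real (card (signs K)) * (\<Sum>k\<in>K. (z k)\<^sup>2 * \<bar>g k\<bar>)
    \<le> sqrt (\<Sum>k\<in>K. (z k)\<^sup>2) * (\<Sum>e\<in>signs K. \<bar>\<Sum>k\<in>K. e k * (z k * \<bar>g k\<bar>)\<bar>)"
proof -
  define E where "E = 5/9 * real (card (signs K))"
  have "E * (\<Sum>k\<in>K. (z k)\<^sup>2 * \<bar>g k\<bar>) \<le> E * (sqrt (\<Sum>k\<in>K. (z k)\<^sup>2) * sqrt (\<Sum>k\<in>K. (z k * \<bar>g k\<bar>)\<^sup>2))"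
    unfolding E_def by (intro mult_left_mono sum_square_mult_abs_le) simp
  also have "\<dots> = sqrt (\<Sum>k\<in>K. (z k)\<^sup>2) * (E * sqrt (\<Sum>k\<in>K. (z k * \<bar>g k\<bar>)\<^sup>2))" by simp
  also have "\<dots> \<le> sqrt (\<Sum>k\<in>K. (z k)\<^sup>2) * (\<Sum>e\<in>signs K. \<bar>\<Sum>k\<in>K. e k * (z k * \<bar>g k\<bar>)\<bar>)"
    unfolding E_def by (intro mult_left_mono khintchine_lower_bound[OF K]) (simp add: sum_nonneg)
  finally show ?thesis unfolding E_def .
qed

text \<open>Sign averaging reduces this to the weighted Khintchine inequality, whose left-hand side
  is linear in \<open>\<bar>g\<bar>\<close> and hence has expectation \<open>5/9 * gauss_abs_mean * (\<Sum>k\<in>K. (z k)\<^sup>2)\<close> up to the factor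
  \<open>card (signs K)\<close>.\<close>
lemma gauss_abs_linear_form_ge:
  fixes z :: "'i::countable \<Rightarrow> real"
  assumes K: "finite K"
  shows "5/9 * gauss_abs_mean * sqrt (\<Sum>k\<in>K. (z k)\<^sup>2) \<le> integral\<^sup>L (gauss_vec K) (\<lambda>g. \<bar>\<Sum>k\<in>K. z k * g k\<bar>)"
proof (cases "(\<Sum>k\<in>K. (z k)\<^sup>2) = 0")
  case True
  then show ?thesis by (simp add: Bochner_Integration.integral_nonneg)
next
  case False
  define Phi where "Phi x = \<bar>\<Sum>k\<in>K. z k * x k\<bar>" for x :: "'i \<Rightarrow> real"
  define s where "s = sqrt (\<Sum>k\<in>K. (z k)\<^sup>2)"
  define E where "E = real (card (signs K))"
  have s0: "s > 0" using False unfolding s_def by (metis less_eq_real_def real_sqrt_gt_0_iff sum_nonneg zero_le_power2)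
  have ss: "s\<^sup>2 = (\<Sum>k\<in>K. (z k)\<^sup>2)" unfolding s_def by (simp add: sum_nonneg)
  have E0: "E > 0" unfolding E_def using K by (simp add: card_signs)
  have c: "continuous_on UNIV Phi" unfolding Phi_def
    by (intro continuous_on_rabs continuous_on_sum continuous_on_mult continuous_on_const continuous_on_product_coordinates)
  have bd: "\<bar>Phi x\<bar> \<le> (\<Sum>k\<in>K. \<bar>z k\<bar>) * (\<Sum>k\<in>K. \<bar>x k\<bar>)" for x
  proof -
    have "\<forall>k\<in>K. \<bar>z k\<bar> \<le> (\<Sum>k\<in>K. \<bar>z k\<bar>)" using K by (auto intro: member_le_sum)
    from abs_sum_mult_le[OF this, of x] show ?thesis by (simp add: Phi_def mult.commute)
  qed
  have C: "0 \<le> (\<Sum>k\<in>K. \<bar>z k\<bar>)" by (simp add: sum_nonneg)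
  have loc: "Phi (restrict x K) = Phi x" for x
    unfolding Phi_def by (intro arg_cong[where f=abs] sum.cong) auto
  note avg = integral_gauss_vec_sign_average[OF K c C bd loc]
  have low_int: "integrable (gauss_vec K) (\<lambda>g. 5/9 * E / s * (\<Sum>k\<in>K. (z k)\<^sup>2 * \<bar>g k\<bar>))"
    using gauss_vec_abs_component(1)[of _ K] by simp
  have "integral\<^sup>L (gauss_vec K) (\<lambda>g. \<Sum>k\<in>K. (z k)\<^sup>2 * \<bar>g k\<bar>) = (\<Sum>k\<in>K. (z k)\<^sup>2) * gauss_abs_mean"
    using gauss_vec_abs_component[of _ K]
    by (subst Bochner_Integration.integral_sum) (simp_all add: sum_distrib_right)
  then have low_val: "integral\<^sup>L (gauss_vec K) (\<lambda>g. 5/9 * E / s * (\<Sum>k\<in>K. (z k)\<^sup>2 * \<bar>g k\<bar>))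
      = 5/9 * E * gauss_abs_mean * s"
    using s0 unfolding ss[symmetric] by (simp add: power2_eq_square field_simps)
  have pointwise: "5/9 * E / s * (\<Sum>k\<in>K. (z k)\<^sup>2 * \<bar>g k\<bar>) \<le> (\<Sum>e\<in>signs K. Phi (\<lambda>k. e k * \<bar>g k\<bar>))" for g
  proof -
    have "(\<Sum>e\<in>signs K. \<bar>\<Sum>k\<in>K. e k * (z k * \<bar>g k\<bar>)\<bar>) = (\<Sum>e\<in>signs K. Phi (\<lambda>k. e k * \<bar>g k\<bar>))"
      unfolding Phi_def by (intro sum.cong refl arg_cong[where f=abs]) (simp add: algebra_simps)
    then show ?thesis
      using khintchine_weighted_lower_bound[OF K, of z g] s0 unfolding E_def s_def[symmetric]
      by (simp add: field_simps)
  qed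
  have "5/9 * E * gauss_abs_mean * s \<le> integral\<^sup>L (gauss_vec K) (\<lambda>g. \<Sum>e\<in>signs K. Phi (\<lambda>k. e k * \<bar>g k\<bar>))"
    unfolding low_val[symmetric] using avg(1)
    by (intro integral_mono[OF low_int] pointwise Bochner_Integration.integrable_sum) auto
  also have "\<dots> = E * integral\<^sup>L (gauss_vec K) Phi" unfolding E_def by (rule avg(2)[symmetric])
  finally show ?thesis using E0 unfolding Phi_def s_def by (simp add: mult.assoc mult.left_commute[of E])
qed

text \<open>The expectation of the supremum dominates that of the maximum of the two linear forms at
  \<open>X\<close> and \<open>Y\<close>, i.e. of their mean plus half the absolute value of \<open>\<Sum>k\<in>I. (X k - Y k) * g k\<close>.\<close>
lemma gauss_width_ge_dist:
  fixes S :: "('i::countable \<Rightarrow> real) set"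
  assumes I: "finite I" and X: "X \<in> S" and Y: "Y \<in> S" and bnd: "\<forall>Z\<in>S. \<forall>k\<in>I. \<bar>Z k\<bar> \<le> B"
  shows "5/9 * gauss_abs_mean * sqrt (\<Sum>k\<in>I. (X k - Y k)\<^sup>2)
    \<le> 2 * integral\<^sup>L (gauss_vec I) (sup_inner S (\<lambda>Z. Z) I)"
proof -
  define F where "F = sup_inner S (\<lambda>Z. Z) I"
  define L where "L Z g = (\<Sum>k\<in>I. g k * Z k)" for Z g :: "'i \<Rightarrow> real"
  define z where "z k = X k - Y k" for k
  have S: "S \<noteq> {}" using X by auto
  have F_int: "integrable (gauss_vec I) F"
  proof -
    have "\<bar>F x\<bar> \<le> \<bar>B\<bar> * (\<Sum>k\<in>I. \<bar>x k\<bar>)" for x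
      using abs_sup_inner_le[OF S bnd, of x] mult_right_mono[OF abs_ge_self[of B] sum_nonneg[of I "\<lambda>k. \<bar>x k\<bar>"]]
      unfolding F_def by simp
    then have "integrable (gauss_vec I) (\<lambda>g. F ((\<lambda>w. w) g))"
      by (intro integrable_gauss_vec_linear_growth[OF I _ abs_ge_zero]
          continuous_on_sup_inner[OF S bnd, folded F_def] measurable_gauss_vec_component) auto
    then show ?thesis by simp
  qed
  have abs_int: "integrable (gauss_vec I) (\<lambda>g. \<bar>\<Sum>k\<in>I. z k * g k\<bar>)"
    using integrable_abs[OF gauss_vec_linear_form(1)[OF I, of z]] by (simp add: mult.commute)
  have max_int: "integrable (gauss_vec I) (\<lambda>g. (L X g + L Y g) / 2 + \<bar>\<Sum>k\<in>I. z k * g k\<bar> / 2)"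
    unfolding L_def using gauss_vec_linear_form(1)[OF I] abs_int by auto
  have max_val: "integral\<^sup>L (gauss_vec I) (\<lambda>g. (L X g + L Y g) / 2 + \<bar>\<Sum>k\<in>I. z k * g k\<bar> / 2)
      = integral\<^sup>L (gauss_vec I) (\<lambda>g. \<bar>\<Sum>k\<in>I. z k * g k\<bar>) / 2"
    unfolding L_def using gauss_vec_linear_form[OF I, of X] gauss_vec_linear_form[OF I, of Y] abs_int by simp
  have "integral\<^sup>L (gauss_vec I) (\<lambda>g. (L X g + L Y g) / 2 + \<bar>\<Sum>k\<in>I. z k * g k\<bar> / 2) \<le> integral\<^sup>L (gauss_vec I) F"
  proof (rule integral_mono[OF max_int F_int])
    fix g
    have "L X g \<le> F g" "L Y g \<le> F g"
      unfolding L_def F_def using sup_inner_upper[OF X bnd] sup_inner_upper[OF Y bnd] by auto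
    moreover have "(\<Sum>k\<in>I. z k * g k) = L X g - L Y g"
      unfolding L_def z_def by (simp add: sum_subtractf[symmetric] algebra_simps)
    ultimately show "(L X g + L Y g) / 2 + \<bar>\<Sum>k\<in>I. z k * g k\<bar> / 2 \<le> F g"
      by (simp add: abs_if field_simps)
  qed
  then have "integral\<^sup>L (gauss_vec I) (\<lambda>g. \<bar>\<Sum>k\<in>I. z k * g k\<bar>) \<le> 2 * integral\<^sup>L (gauss_vec I) F"
    unfolding max_val by simp
  with gauss_abs_linear_form_ge[OF I, of z] show ?thesis unfolding z_def F_def by simp
qed

section \<open>Bounded families sampled at random entries\<close>

text \<open>The contraction principle with \<open>x \<mapsto> x\<^sup>2\<close>, which is \<open>2 * D\<close>-Lipschitz on \<open>[-D, D]\<close>,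
  followed by the comparison with the Gaussian process.\<close>
lemma sum_signs_sup_inner_squares_le:
  fixes b :: "'t \<Rightarrow> 'i::countable \<Rightarrow> real"
  assumes K: "finite K" and T: "T \<noteq> {}" and bD: "\<forall>t\<in>T. \<forall>k. \<bar>b t k\<bar> \<le> D"
  shows "(\<Sum>e\<in>signs K. sup_inner T (\<lambda>t k. (b t k)\<^sup>2) K e)
     \<le> 2 * D * (real (card (signs K)) / gauss_abs_mean * integral\<^sup>L (gauss_vec K) (sup_inner T b K))"
proof -
  obtain t0 where "t0 \<in> T" using T by blast
  then have D: "D \<ge> 0" using bD abs_ge_zero[of "b t0 undefined"] by fastforce
  have ba: "\<forall>t\<in>T. \<forall>k. \<bar>b t k\<bar> \<le> D + D\<^sup>2"
  proof (intro ballI allI)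
    fix t k assume "t \<in> T"
    then have "\<bar>b t k\<bar> \<le> D" using bD by blast
    moreover have "0 \<le> D\<^sup>2" by simp
    ultimately show "\<bar>b t k\<bar> \<le> D + D\<^sup>2" by linarith
  qed
  have bp: "\<forall>t\<in>T. \<forall>k. \<bar>(b t k)\<^sup>2\<bar> \<le> D + D\<^sup>2"
  proof (intro ballI allI)
    fix t k assume "t \<in> T"
    then have "\<bar>b t k\<bar>\<^sup>2 \<le> D\<^sup>2" using bD by (intro power_mono) auto
    then show "\<bar>(b t k)\<^sup>2\<bar> \<le> D + D\<^sup>2" using D by simp
  qed
  have lip: "\<forall>t\<in>T. \<forall>s\<in>T. \<forall>k. \<bar>(b t k)\<^sup>2 - (b s k)\<^sup>2\<bar> \<le> 2 * D * \<bar>b t k - b s k\<bar>"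
    using bD by (auto intro!: abs_diff_squares_le)
  have bT: "\<forall>t\<in>T. \<forall>k\<in>K. \<bar>b t k\<bar> \<le> D" using bD by blast
  have "(\<Sum>e\<in>signs K. sup_inner T (\<lambda>t k. (b t k)\<^sup>2) K e) \<le> (\<Sum>e\<in>signs K. SUP t\<in>T. 2 * D * (\<Sum>k\<in>K. e k * b t k))"
    using sum_signs_contraction[OF K T ba bp lip _, of "\<lambda>_. 0" 0] D unfolding sup_inner_def by simp
  also have "\<dots> = (\<Sum>e\<in>signs K. 2 * D * sup_inner T b K e)"
    unfolding sup_inner_def using D by (intro sum.cong refl cSUP_cmult T bdd_above_sup_inner[OF bT]) simp
  also have "\<dots> = 2 * D * (\<Sum>e\<in>signs K. sup_inner T b K e)" by (simp add: sum_distrib_left)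
  also have "\<dots> \<le> 2 * D * (real (card (signs K)) / gauss_abs_mean * integral\<^sup>L (gauss_vec K) (sup_inner T b K))"
    using D by (intro mult_left_mono sum_signs_sup_inner_le_gauss[OF K T bT]) simp
  finally show ?thesis .
qed

lemma sampled_sup_squares_le:
  fixes a :: "'t \<Rightarrow> 'p \<Rightarrow> real" and m :: nat
  assumes I: "finite I" "I \<noteq> {}" and T: "T \<noteq> {}" and aD: "\<forall>t\<in>T. \<forall>p. \<bar>a t p\<bar> \<le> D"
  defines "\<Omega> \<equiv> PiE {..<m} (\<lambda>_. I)"
  shows "(\<Sum>\<omega>\<in>\<Omega>. SUP t\<in>T. \<Sum>k<m. (a t (\<omega> k))\<^sup>2) / real (card \<Omega>)
    \<le> real m * (SUP t\<in>T. (\<Sum>p\<in>I. (a t p)\<^sup>2) / real (card I))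
      + 4 / gauss_abs_mean * D
        * ((\<Sum>\<omega>\<in>\<Omega>. integral\<^sup>L (gauss_vec {..<m}) (sup_inner T (\<lambda>t k. a t (\<omega> k)) {..<m})) / real (card \<Omega>))"
proof -
  define N where "N = real (card \<Omega>)"
  define E where "E = real (card (signs {..<m}))"
  define G where "G \<omega> = integral\<^sup>L (gauss_vec {..<m}) (sup_inner T (\<lambda>t k. a t (\<omega> k)) {..<m})" for \<omega>
  have N: "N > 0" unfolding N_def \<Omega>_def using I by (simp add: card_gt_0_iff finite_PiE PiE_eq_empty_iff)
  have E: "E > 0" unfolding E_def by (simp add: card_signs)
  have "\<forall>t\<in>T. \<forall>p. \<bar>(a t p)\<^sup>2\<bar> \<le> D\<^sup>2"
  proof (intro ballI allI)
    fix t p assume "t \<in> T"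
    then have "\<bar>a t p\<bar>\<^sup>2 \<le> D\<^sup>2" using aD by (intro power_mono) auto
    then show "\<bar>(a t p)\<^sup>2\<bar> \<le> D\<^sup>2" by simp
  qed
  note sym = symmetrization[OF finite_lessThan I T this, of m, folded \<Omega>_def N_def E_def]
  have "(\<Sum>e\<in>signs {..<m}. sup_inner T (\<lambda>t k. (a t (\<omega> k))\<^sup>2) {..<m} e) \<le> 2 * D * (E / gauss_abs_mean * G \<omega>)" for \<omega>
    unfolding E_def G_def by (rule sum_signs_sup_inner_squares_le) (use aD T in auto)
  then have "(\<Sum>\<omega>\<in>\<Omega>. \<Sum>e\<in>signs {..<m}. sup_inner T (\<lambda>t k. (a t (\<omega> k))\<^sup>2) {..<m} e)
      \<le> 2 * D * (E / gauss_abs_mean) * (\<Sum>\<omega>\<in>\<Omega>. G \<omega>)"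
    by (simp add: sum_mono sum_distrib_left mult.assoc)
  then have "2 / E * (\<Sum>\<omega>\<in>\<Omega>. \<Sum>e\<in>signs {..<m}. sup_inner T (\<lambda>t k. (a t (\<omega> k))\<^sup>2) {..<m} e)
      \<le> 2 / E * (2 * D * (E / gauss_abs_mean) * (\<Sum>\<omega>\<in>\<Omega>. G \<omega>))"
    using E by (intro mult_left_mono) auto
  also have "\<dots> = 4 / gauss_abs_mean * D * (\<Sum>\<omega>\<in>\<Omega>. G \<omega>)"
    using E by (simp add: field_simps)
  finally have "(\<Sum>\<omega>\<in>\<Omega>. SUP t\<in>T. \<Sum>k<m. (a t (\<omega> k))\<^sup>2)
      \<le> N * (real m * (SUP t\<in>T. (\<Sum>p\<in>I. (a t p)\<^sup>2) / real (card I))) + 4 / gauss_abs_mean * D * (\<Sum>\<omega>\<in>\<Omega>. G \<omega>)"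
    using sym by simp
  then show ?thesis using N unfolding G_def N_def by (simp add: field_simps)
qed

section \<open>Matrices in the Frobenius ball\<close>

lemma finite_idx: "finite (idx d1 d2)"
  unfolding idx_def by simp

lemma card_idx: "card (idx d1 d2) = d1 * d2"
  unfolding idx_def by (simp add: card_cartesian_product)

lemma idx_nonempty: "0 < d1 \<Longrightarrow> 0 < d2 \<Longrightarrow> idx d1 d2 \<noteq> {}"
  unfolding idx_def by auto

lemma frob_ball_outside_idx: "X \<in> frob_ball d1 d2 \<Longrightarrow> p \<notin> idx d1 d2 \<Longrightarrow> X p = 0"
  unfolding frob_ball_def mat_space_def by blast

lemma abs_le_1_if_frob_ball:
  assumes "X \<in> frob_ball d1 d2"
  shows "\<bar>X p\<bar> \<le> 1"
proof (cases "p \<in> idx d1 d2")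
  case True
  have "(X p)\<^sup>2 \<le> (\<Sum>q\<in>idx d1 d2. (X q)\<^sup>2)" by (rule member_le_sum[OF True]) (auto simp: finite_idx)
  also have "\<dots> \<le> 1" using assms unfolding frob_ball_def by auto
  finally show ?thesis by (simp add: abs_square_le_1)
next
  case False
  then show ?thesis using frob_ball_outside_idx[OF assms] by simp
qed

lemma abs_diff_le_diam_inf:
  assumes d: "0 < d1" "0 < d2" and S: "S \<subseteq> frob_ball d1 d2" and X: "X \<in> S" and Y: "Y \<in> S"
  shows "\<bar>X p - Y p\<bar> \<le> diam_inf d1 d2 S"
proof -
  define M where "M Z W = Max ((\<lambda>p. \<bar>Z p - W p\<bar>) ` idx d1 d2)" for Z W :: "nat \<times> nat \<Rightarrow> real"
  have le_M: "\<bar>Z q - W q\<bar> \<le> M Z W" if "q \<in> idx d1 d2" for Z W q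
    unfolding M_def using that finite_idx by (intro Max_ge) auto
  have bdd: "bdd_above ((\<lambda>(Z, W). M Z W) ` (S \<times> S))"
  proof (rule bdd_aboveI[of _ 2], clarify)
    fix Z W assume "Z \<in> S" "W \<in> S"
    then have ZW: "\<bar>Z q\<bar> \<le> 1" "\<bar>W q\<bar> \<le> 1" for q using S abs_le_1_if_frob_ball by blast+
    have "\<bar>Z q - W q\<bar> \<le> 2" for q using abs_triangle_ineq4[of "Z q" "W q"] ZW[of q] by linarith
    then show "M Z W \<le> 2" unfolding M_def using finite_idx idx_nonempty[OF d] by (subst Max_le_iff) auto
  qed
  have M_le: "M X Y \<le> diam_inf d1 d2 S"
    unfolding diam_inf_def M_def[symmetric] using cSUP_upper[OF _ bdd, where x="(X, Y)"] X Y by simp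
  show ?thesis
  proof (cases "p \<in> idx d1 d2")
    case True
    then show ?thesis using le_M M_le by (meson order_trans)
  next
    case False
    obtain q where "q \<in> idx d1 d2" using idx_nonempty[OF d] by auto
    then have "0 \<le> M X Y" using le_M[of q X Y] by linarith
    moreover have "X p = 0" "Y p = 0" using False X Y S frob_ball_outside_idx by blast+
    ultimately show ?thesis using M_le by simp
  qed
qed

lemma integral_Omega_pmf:
  assumes "0 < d1" "0 < d2"
  shows "measure_pmf.expectation (Omega_pmf d1 d2 m) h
    = (\<Sum>\<omega>\<in>PiE {..<m} (\<lambda>_. idx d1 d2). h \<omega>) / real (card (PiE {..<m} (\<lambda>_. idx d1 d2)))"
  unfolding Omega_pmf_def using assms finite_idx idx_nonempty
  by (subst integral_pmf_of_set) (simp_all add: finite_PiE PiE_eq_empty_iff)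

lemma sup_frob_dist_le_gauss_width:
  assumes S: "S \<subseteq> frob_ball d1 d2" and X: "X \<in> S" and Y: "Y \<in> S"
  shows "(\<Sum>p\<in>idx d1 d2. (X p - Y p)\<^sup>2) \<le> 324 / (25 * gauss_abs_mean\<^sup>2) * (wG d1 d2 S)\<^sup>2"
proof -
  have wG: "wG d1 d2 S = integral\<^sup>L (gauss_vec (idx d1 d2)) (sup_inner S (\<lambda>Z. Z) (idx d1 d2))"
    unfolding wG_def gauss_vec_def sup_inner_def
    by (intro Bochner_Integration.integral_cong refl SUP_cong sum.cong) (simp add: mult.commute)
  have "\<forall>Z\<in>S. \<forall>p\<in>idx d1 d2. \<bar>Z p\<bar> \<le> 1" using S abs_le_1_if_frob_ball by blast
  from gauss_width_ge_dist[OF finite_idx X Y this, folded wG]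
  have "(5/9 * gauss_abs_mean * sqrt (\<Sum>p\<in>idx d1 d2. (X p - Y p)\<^sup>2))\<^sup>2 \<le> (2 * wG d1 d2 S)\<^sup>2"
    using gauss_abs_mean_pos by (intro power_mono) (auto simp: sum_nonneg)
  then show ?thesis
    using gauss_abs_mean_pos by (simp add: power_mult_distrib sum_nonneg field_simps)
qed

lemma expected_sup_sampled_dist_le:
  assumes d: "0 < d1" "0 < d2" and S: "S \<subseteq> frob_ball d1 d2" and S_ne: "S \<noteq> {}"
  shows "measure_pmf.expectation (Omega_pmf d1 d2 m)
       (\<lambda>\<omega>. SUP (X, Y)\<in>S \<times> S. \<Sum>k<m. (X (\<omega> k) - Y (\<omega> k))\<^sup>2)
    \<le> 324 / (25 * gauss_abs_mean\<^sup>2) * (real m / (real d1 * real d2)) * (wG d1 d2 S)\<^sup>2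
       + 4 / gauss_abs_mean * diam_inf d1 d2 S * wOg d1 d2 m S"
proof -
  define I where "I = idx d1 d2"
  define a where "a t p = fst t p - snd t p" for t :: "(nat \<times> nat \<Rightarrow> real) \<times> (nat \<times> nat \<Rightarrow> real)" and p
  define W where "W = 324 / (25 * gauss_abs_mean\<^sup>2) * (wG d1 d2 S)\<^sup>2"
  have I: "finite I" "I \<noteq> {}" unfolding I_def using finite_idx idx_nonempty[OF d] by auto
  have T: "S \<times> S \<noteq> {}" using S_ne by simp
  have aD: "\<forall>t\<in>S \<times> S. \<forall>p. \<bar>a t p\<bar> \<le> diam_inf d1 d2 S"
    unfolding a_def using abs_diff_le_diam_inf[OF d S] by auto
  have "(\<Sum>p\<in>I. (a t p)\<^sup>2) / real (card I) \<le> W / (real d1 * real d2)" if "t \<in> S \<times> S" for t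
  proof -
    have "(\<Sum>p\<in>I. (a t p)\<^sup>2) \<le> W"
      using sup_frob_dist_le_gauss_width[OF S, of "fst t" "snd t"] that unfolding I_def a_def W_def by auto
    then show ?thesis unfolding I_def card_idx using d by (simp add: divide_right_mono)
  qed
  then have mean: "(SUP t\<in>S \<times> S. (\<Sum>p\<in>I. (a t p)\<^sup>2) / real (card I)) \<le> W / (real d1 * real d2)"
    by (intro cSUP_least[OF T])
  have "real m * (SUP t\<in>S \<times> S. (\<Sum>p\<in>I. (a t p)\<^sup>2) / real (card I))
      \<le> 324 / (25 * gauss_abs_mean\<^sup>2) * (real m / (real d1 * real d2)) * (wG d1 d2 S)\<^sup>2"
    using mult_left_mono[OF mean, of "real m"] unfolding W_def by (simp add: field_simps)
  moreover have E_eq: "measure_pmf.expectation (Omega_pmf d1 d2 m) (\<lambda>\<omega>. SUP (X, Y)\<in>S \<times> S. \<Sum>k<m. (X (\<omega> k) - Y (\<omega> k))\<^sup>2)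
      = (\<Sum>\<omega>\<in>PiE {..<m} (\<lambda>_. I). SUP t\<in>S \<times> S. \<Sum>k<m. (a t (\<omega> k))\<^sup>2) / real (card (PiE {..<m} (\<lambda>_. I)))"
    unfolding integral_Omega_pmf[OF d] I_def a_def by (simp add: case_prod_beta)
  moreover have wOg_eq: "wOg d1 d2 m S = (\<Sum>\<omega>\<in>PiE {..<m} (\<lambda>_. I).
      integral\<^sup>L (gauss_vec {..<m}) (sup_inner (S \<times> S) (\<lambda>t k. a t (\<omega> k)) {..<m})) / real (card (PiE {..<m} (\<lambda>_. I)))"
    unfolding wOg_def integral_Omega_pmf[OF d] I_def a_def sup_inner_def gauss_vec_def by (simp add: case_prod_beta)
  ultimately show ?thesis
    unfolding E_eq wOg_eq using sampled_sup_squares_le[OF I T aD, of m] by linarith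
qed

theorem lemma4:
  shows "\<exists>k3 k4 :: real. \<forall>d1 d2 m :: nat. \<forall>S :: (nat \<times> nat \<Rightarrow> real) set.
    0 < d1 \<longrightarrow> 0 < d2 \<longrightarrow> compact S \<longrightarrow> S \<subseteq> frob_ball d1 d2 \<longrightarrow>
    has_nonempty_interior d1 d2 S \<longrightarrow>
    measure_pmf.expectation (Omega_pmf d1 d2 m)
       (\<lambda>\<omega>. SUP (X, Y)\<in>S \<times> S. \<Sum>k<m. (X (\<omega> k) - Y (\<omega> k))\<^sup>2)
    \<le> k3 * (real m / (real d1 * real d2)) * (wG d1 d2 S)\<^sup>2
       + k4 * diam_inf d1 d2 S * wOg d1 d2 m S"
proof (intro exI allI impI)
  fix d1 d2 m :: nat and S :: "(nat \<times> nat \<Rightarrow> real) set"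
  assume d1: "0 < d1" and d2: "0 < d2" and "compact S" and S: "S \<subseteq> frob_ball d1 d2"
    and "has_nonempty_interior d1 d2 S"
  then have "S \<noteq> {}" unfolding has_nonempty_interior_def by auto
  then show "measure_pmf.expectation (Omega_pmf d1 d2 m)
       (\<lambda>\<omega>. SUP (X, Y)\<in>S \<times> S. \<Sum>k<m. (X (\<omega> k) - Y (\<omega> k))\<^sup>2)
    \<le> 324 / (25 * gauss_abs_mean\<^sup>2) * (real m / (real d1 * real d2)) * (wG d1 d2 S)\<^sup>2
       + 4 / gauss_abs_mean * diam_inf d1 d2 S * wOg d1 d2 m S"
    by (rule expected_sup_sampled_dist_le[OF d1 d2 S])
qed

end
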